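(* Let $f,f':(\mathbb{R}^2,0)\to PT^*\mathbb{R}^2$ be completely integrable equations with independent first integrals $\mu,\mu':(\mathbb{R}^2,0)\to(\mathbb{R},0)$ respectively, and assume that $\pi\circ f$ and $\pi\circ f':(\mathbb{R}^2,0)\to(\mathbb{R}^2,0)$ have nowhere dense sets of singular points. Then $f$ and $f'$ are equivalent under the group of point transformations if and only if the integral diagrams $(\mu,\pi\circ f)$ and $(\mu',\pi\circ f')$ are equivalent.
   Context: $PT^*\mathbb{R}^2$ is the projectivized cotangent bundle (manifold of contact elements) of the plane, with projection $\pi: PT^*\mathbb{R}^2\to\mathbb{R}^2$ and its canonical contact structure, locally given in coordinates $(x,y,p)$ by $\theta = dy - p\,dx$. An equation germ $f:(\mathbb{R}^2,0)\to PT^*\mathbb{R}^2$ is completely integrable if there exists a submersion germ $\mu:(\mathbb{R}^2,0)\to\mathbb{R}$ (an independent first integral) with $d\mu\wedge f^*\theta = 0$. For a map germ $g$ and submersion germ $\mu$, the pair $(\mu,g)$ with $g=\pi\circ f$ is the induced integral diagram. Two integral diagrams $(\mu,g),(\mu',g')$ are equivalent if there exist diffeomorphism germs $\kappa$ of $(\mathbb{R},0)$ and $\psi,\phi$ of $(\mathbb{R}^2,0)$ with $\kappa\circ\mu=\mu'\circ\psi$ and $\phi\circ g = g'\circ\psi$. Two equations $f,f'$ are equivalent under the group of point transformations if there is a diffeomorphism germ $\phi:(\mathbb{R}^2,\pi(f(0)))\to(\mathbb{R}^2,\pi(f'(0)))$ whose canonical lift $\hat\phi:(PT^*\mathbb{R}^2,f(0))\to(PT^*\mathbb{R}^2,f'(0))$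 (the induced map on contact elements) satisfies $\hat\phi\circ f = f'\circ\psi$ for some diffeomorphism germ $\psi$ of $(\mathbb{R}^2,0)$. *)

theory Defs
  imports "HOL-Analysis.Analysis"
begin

coinductive smooth_on :: "'a::real_normed_vector set \<Rightarrow> ('a \<Rightarrow> 'b::real_normed_vector) \<Rightarrow> bool"
  for S :: "'a set" where
  "f differentiable_on S \<Longrightarrow> (\<And>v. smooth_on S (\<lambda>x. frechet_derivative f (at x) v))
    \<Longrightarrow> smooth_on S f"

definition smooth_germ :: "'a::real_normed_vector \<Rightarrow> ('a \<Rightarrow> 'b::real_normed_vector) \<Rightarrow> bool" where
  "smooth_germ a f \<longleftrightarrow> (\<exists>U. open U \<and> a \<in> U \<and> smooth_on U f)"

definition diffeo_germ :: "'a::real_normed_vector \<Rightarrow> 'a \<Rightarrow> ('a \<Rightarrow> 'a) \<Rightarrow> bool" where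
  "diffeo_germ a b \<phi> \<longleftrightarrow> \<phi> a = b \<and>
     (\<exists>U. open U \<and> a \<in> U \<and> open (\<phi> ` U) \<and> inj_on \<phi> U \<and>
          smooth_on U \<phi> \<and> smooth_on (\<phi> ` U) (inv_into U \<phi>))"

definition submersion_germ :: "'a::real_normed_vector \<Rightarrow> ('a \<Rightarrow> 'b::real_normed_vector) \<Rightarrow> bool" where
  "submersion_germ a \<mu> \<longleftrightarrow> smooth_germ a \<mu> \<and> surj (frechet_derivative \<mu> (at a))"

definition sing_set :: "(real^2 \<Rightarrow> real^2) \<Rightarrow> (real^2) set" where
  "sing_set g = {x. \<not> surj (frechet_derivative g (at x))}"

definition nowhere_dense_sing :: "(real^2 \<Rightarrow> real^2) \<Rightarrow> bool" where
  "nowhere_dense_sing g \<longleftrightarrow>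
     (\<exists>U. open U \<and> (0::real^2) \<in> U \<and> smooth_on U g \<and> interior (closure (U \<inter> sing_set g)) = {})"

text \<open>An equation germ f : (R^2,0) -> PT*R^2 is represented by a pair (g, \<omega>):
  g = \<pi> \<circ> f and \<omega> u a nonvanishing covector (identified with a vector via the inner
  product) whose kernel is the contact element f u.  In the chart (x,y,p) of the paper
  \<omega> = (-p, 1), i.e. the contact element is ker (dy - p dx).\<close>
definition equation_germ :: "(real^2 \<Rightarrow> real^2) \<Rightarrow> (real^2 \<Rightarrow> real^2) \<Rightarrow> bool" where
  "equation_germ g \<omega> \<longleftrightarrow>
     (\<exists>U. open U \<and> (0::real^2) \<in> U \<and> smooth_on U g \<and> smooth_on U \<omega> \<and> (\<forall>u\<in>U. \<omega> u \<noteq> 0))"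

text \<open>Pull-back f^*\<theta> of the contact form (up to a nonvanishing factor).\<close>
definition pullback_contact :: "(real^2 \<Rightarrow> real^2) \<Rightarrow> (real^2 \<Rightarrow> real^2) \<Rightarrow> real^2 \<Rightarrow> real^2 \<Rightarrow> real" where
  "pullback_contact g \<omega> u h = \<omega> u \<bullet> frechet_derivative g (at u) h"

definition wedge2 :: "(real^2 \<Rightarrow> real^2 \<Rightarrow> real) \<Rightarrow> (real^2 \<Rightarrow> real^2 \<Rightarrow> real) \<Rightarrow> real^2 \<Rightarrow> real" where
  "wedge2 \<alpha> \<beta> u = \<alpha> u (axis 1 1) * \<beta> u (axis 2 1) - \<alpha> u (axis 2 1) * \<beta> u (axis 1 1)"

definition first_integral :: "(real^2 \<Rightarrow> real) \<Rightarrow> (real^2 \<Rightarrow> real^2) \<Rightarrow> (real^2 \<Rightarrow> real^2) \<Rightarrow> bool" where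
  "first_integral \<mu> g \<omega> \<longleftrightarrow> submersion_germ 0 \<mu> \<and>
     (\<forall>\<^sub>F u in nhds 0. wedge2 (\<lambda>u. frechet_derivative \<mu> (at u)) (pullback_contact g \<omega>) u = 0)"

text \<open>Equivalence under point transformations: the canonical lift of \<phi> sends the
  contact element ker \<omega> at q to D\<phi>(q)(ker \<omega>) at \<phi> q.\<close>
definition point_equivalent ::
  "(real^2 \<Rightarrow> real^2) \<Rightarrow> (real^2 \<Rightarrow> real^2) \<Rightarrow> (real^2 \<Rightarrow> real^2) \<Rightarrow> (real^2 \<Rightarrow> real^2) \<Rightarrow> bool" where
  "point_equivalent g \<omega> g' \<omega>' \<longleftrightarrow>
     (\<exists>\<phi> \<psi>. diffeo_germ (g 0) (g' 0) \<phi> \<and> diffeo_germ 0 0 \<psi> \<and>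
        (\<forall>\<^sub>F u in nhds 0. \<phi> (g u) = g' (\<psi> u) \<and>
            frechet_derivative \<phi> (at (g u)) ` {h. \<omega> u \<bullet> h = 0} = {h. \<omega>' (\<psi> u) \<bullet> h = 0}))"

definition integral_diagram_equiv ::
  "(real^2 \<Rightarrow> real) \<Rightarrow> (real^2 \<Rightarrow> real^2) \<Rightarrow> (real^2 \<Rightarrow> real) \<Rightarrow> (real^2 \<Rightarrow> real^2) \<Rightarrow> bool" where
  "integral_diagram_equiv \<mu> g \<mu>' g' \<longleftrightarrow>
     (\<exists>\<kappa> \<psi> \<phi>. diffeo_germ (\<mu> 0) (\<mu>' 0) \<kappa> \<and> diffeo_germ 0 0 \<psi> \<and> diffeo_germ (g 0) (g' 0) \<phi> \<and>
        (\<forall>\<^sub>F u in nhds 0. \<kappa> (\<mu> u) = \<mu>' (\<psi> u) \<and> \<phi> (g u) = g' (\<psi> u)))"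

end

theory Submission
  imports Defs
begin

text \<open>
  Everything can be read off at the regular points of g = \<pi> \<circ> f, which are dense. There the contact
  form and the first integral determine each other: ker (\<omega> \<circ> Dg) = ker d\<mu>, because
  d\<mu> \<and> f*\<theta> = 0 and both forms are nonzero.

  If (\<kappa>, \<psi>, \<phi>) is an equivalence of integral diagrams, differentiating \<kappa> \<circ> \<mu> = \<mu>' \<circ> \<psi> and
  \<phi> \<circ> g = g' \<circ> \<psi> shows that D\<phi> maps the contact line ker \<omega>(u) into ker \<omega>'(\<psi> u) at regular
  points u. This is the vanishing of a continuous function, so it holds near 0, and the lift of \<phi>
  carries f to f'.

  Conversely, if the lift of \<phi> carries f to f' along \<psi>, the same computation shows that
  d\<mu> \<and> d(\<mu>' \<circ> \<psi>) vanishes at regular points, hence near 0. Two submersions with dependent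
  differentials are functionally dependent: \<mu>' \<circ> \<psi> = \<kappa> \<circ> \<mu>. To get \<kappa> as a diffeomorphism
  it suffices to compare \<mu> and \<mu>' \<circ> \<psi> along a line transversal to the level sets of \<mu>, which
  only needs the inverse function theorem in dimension one.
\<close>

lemma smooth_on_differentiable_on: "smooth_on S f \<Longrightarrow> f differentiable_on S"
  by (erule smooth_on.cases) auto

lemma smooth_on_frechet_derivative:
  "smooth_on S f \<Longrightarrow> smooth_on S (\<lambda>x. frechet_derivative f (at x) v)"
  by (erule smooth_on.cases) auto

lemma smooth_on_has_derivative:
  "smooth_on S f \<Longrightarrow> open S \<Longrightarrow> x \<in> S \<Longrightarrow> (f has_derivative frechet_derivative f (at x)) (at x)"
  using smooth_on_differentiable_on differentiable_on_eq_differentiable_at frechet_derivative_works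
  by blast

lemma smooth_on_imp_continuous_on: "smooth_on S f \<Longrightarrow> continuous_on S f"
  using smooth_on_differentiable_on differentiable_imp_continuous_on by blast

lemma differentiable_on_cong_open:
  assumes "open S" "f differentiable_on S" "\<And>x. x \<in> S \<Longrightarrow> g x = f x"
  shows "g differentiable_on S"
  using assms has_derivative_transform_within_open
  unfolding differentiable_on_eq_differentiable_at[OF assms(1)] differentiable_def by metis

lemma smooth_on_coinduct_open:
  assumes S: "open S" and "X f0" and "\<And>x. x \<in> S \<Longrightarrow> f x = f0 x"
    and diff: "\<And>h. X h \<Longrightarrow> h differentiable_on S"
    and deriv: "\<And>h v. X h \<Longrightarrow> \<exists>h'. X h' \<and> (\<forall>x\<in>S. frechet_derivative h (at x) v = h' x)"
  shows "smooth_on S f"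
proof -
  define Y where "Y h \<longleftrightarrow> (\<exists>h0. X h0 \<and> (\<forall>x\<in>S. h x = h0 x))" for h
  have "Y f" using assms(2,3) unfolding Y_def by blast
  then show ?thesis
  proof (coinduction arbitrary: f rule: smooth_on.coinduct)
    case (smooth_on h)
    then obtain h0 where h0: "X h0" "\<forall>x\<in>S. h x = h0 x" unfolding Y_def by blast
    have dh0: "h0 differentiable_on S" using diff h0(1) .
    have "Y (\<lambda>x. frechet_derivative h (at x) v)" for v
    proof -
      obtain h' where h': "X h'" "\<forall>x\<in>S. frechet_derivative h0 (at x) v = h' x"
        using deriv h0(1) by blast
      have "frechet_derivative h (at x) v = h' x" if "x \<in> S" for x
        using frechet_derivative_transform_within_open[of h0 x S h] dh0 S that h0(2) h'(2)
        by (metis differentiable_on_eq_differentiable_at)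
      then show ?thesis unfolding Y_def using h'(1) by blast
    qed
    moreover have "h differentiable_on S"
      using differentiable_on_cong_open[OF S dh0] h0(2) by blast
    ultimately show ?case by blast
  qed
qed

lemma smooth_on_subset: "smooth_on S f \<Longrightarrow> T \<subseteq> S \<Longrightarrow> smooth_on T f"
  by (coinduction arbitrary: f rule: smooth_on.coinduct)
    (use smooth_on_frechet_derivative smooth_on_differentiable_on differentiable_on_subset in blast)

lemma smooth_on_cong: "smooth_on S f \<Longrightarrow> open S \<Longrightarrow> (\<And>x. x \<in> S \<Longrightarrow> g x = f x) \<Longrightarrow> smooth_on S g"
  by (rule smooth_on_coinduct_open[where X="smooth_on S"])
    (auto intro: smooth_on_differentiable_on smooth_on_frechet_derivative)

lemma smooth_on_const: "open S \<Longrightarrow> smooth_on S (\<lambda>x. c)"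
  by (rule smooth_on_coinduct_open[where X="\<lambda>h. \<exists>c. h = (\<lambda>x. c)"]) auto

lemma smooth_on_ident: "open S \<Longrightarrow> smooth_on S (\<lambda>x. x)"
  by (rule smooth_on_coinduct_open[where X="\<lambda>h. h = (\<lambda>x. x) \<or> (\<exists>c. h = (\<lambda>x. c))"])
    (auto intro: exI[of _ "\<lambda>x. 0"] exI[of _ "\<lambda>x. _"])

lemma smooth_on_coinduct_derivative:
  assumes S: "open S" and "X f"
    and step: "\<And>h. X h \<Longrightarrow>
      \<exists>D. (\<forall>x\<in>S. (h has_derivative D x) (at x)) \<and> (\<forall>v. X (\<lambda>x. D x v))"
  shows "smooth_on S f"
proof (rule smooth_on_coinduct_open[where X=X, OF S assms(2)])
  fix h assume "X h"
  then obtain D where D: "\<forall>x\<in>S. (h has_derivative D x) (at x)" "\<forall>v. X (\<lambda>x. D x v)"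
    using step by blast
  show "h differentiable_on S"
    using D(1) unfolding differentiable_on_eq_differentiable_at[OF S] differentiable_def by blast
  have "frechet_derivative h (at x) = D x" if "x \<in> S" for x
    using D(1) that frechet_derivative_at by (metis (no_types))
  then show "\<exists>h'. X h' \<and> (\<forall>x\<in>S. frechet_derivative h (at x) v = h' x)" for v
    using D(2) by (intro exI[of _ "\<lambda>x. D x v"]) simp
qed simp

lemma smooth_on_bounded_linear_compose:
  assumes S: "open S" and l: "bounded_linear l" and f: "smooth_on S f"
  shows "smooth_on S (\<lambda>x. l (f x))"
proof (rule smooth_on_coinduct_derivative[where X="\<lambda>h. \<exists>f. smooth_on S f \<and> h = (\<lambda>x. l (f x))", OF S])
  fix h assume "\<exists>f. smooth_on S f \<and> h = (\<lambda>x. l (f x))"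
  then obtain f where f: "smooth_on S f" and h: "h = (\<lambda>x. l (f x))" by blast
  have "\<forall>x\<in>S. (h has_derivative (\<lambda>w. l (frechet_derivative f (at x) w))) (at x)"
    unfolding h using bounded_linear.has_derivative[OF l smooth_on_has_derivative[OF f S]] by blast
  then show "\<exists>D. (\<forall>x\<in>S. (h has_derivative D x) (at x)) \<and>
      (\<forall>v. \<exists>f. smooth_on S f \<and> (\<lambda>x. D x v) = (\<lambda>x. l (f x)))"
    using smooth_on_frechet_derivative[OF f]
    by (intro exI[of _ "\<lambda>x w. l (frechet_derivative f (at x) w)"]) blast
qed (use f in auto)

lemma smooth_on_bounded_linear: "open S \<Longrightarrow> bounded_linear l \<Longrightarrow> smooth_on S l"
  using smooth_on_bounded_linear_compose[OF _ _ smooth_on_ident] by blast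

text \<open>By the Leibniz rule, sums of products of smooth factors are closed under directional
  derivatives; so they form a coinduction invariant for smoothness of products and sums.\<close>
inductive smooth_product_sum :: "'a::real_normed_vector set \<Rightarrow> ('a \<Rightarrow> 'b::real_normed_vector) \<Rightarrow> bool"
  for S where
  zero: "smooth_product_sum S (\<lambda>x. 0)"
| product: "smooth_on S (a :: 'a \<Rightarrow> real) \<Longrightarrow> smooth_on S k \<Longrightarrow> smooth_product_sum S (\<lambda>x. a x *\<^sub>R k x)"
| add: "smooth_product_sum S h1 \<Longrightarrow> smooth_product_sum S h2 \<Longrightarrow> smooth_product_sum S (\<lambda>x. h1 x + h2 x)"

lemma smooth_product_sum_has_derivative:
  assumes S: "open S" and "smooth_product_sum S h"
  shows "\<exists>D. (\<forall>x\<in>S. (h has_derivative D x) (at x)) \<and> (\<forall>v. smooth_product_sum S (\<lambda>x. D x v))"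
  using assms(2)
proof induction
  case zero
  show ?case by (intro exI[of _ "\<lambda>x w. 0"]) (auto intro: smooth_product_sum.zero)
next
  case (product a k)
  let ?D = "\<lambda>x w. a x *\<^sub>R frechet_derivative k (at x) w + frechet_derivative a (at x) w *\<^sub>R k x"
  have "\<forall>x\<in>S. ((\<lambda>x. a x *\<^sub>R k x) has_derivative ?D x) (at x)"
    using has_derivative_scaleR smooth_on_has_derivative[OF product(1) S]
      smooth_on_has_derivative[OF product(2) S] by blast
  moreover have "smooth_product_sum S (\<lambda>x. ?D x v)" for v
    by (intro smooth_product_sum.add smooth_product_sum.product product smooth_on_frechet_derivative)
  ultimately show ?case by (intro exI[of _ ?D]) blast
next
  case (add h1 h2)
  then obtain D1 D2 where
    "\<forall>x\<in>S. (h1 has_derivative D1 x) (at x)" "\<forall>v. smooth_product_sum S (\<lambda>x. D1 x v)"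
    "\<forall>x\<in>S. (h2 has_derivative D2 x) (at x)" "\<forall>v. smooth_product_sum S (\<lambda>x. D2 x v)"
    by blast
  then show ?case
    by (intro exI[of _ "\<lambda>x w. D1 x w + D2 x w"]) (auto intro: has_derivative_add smooth_product_sum.add)
qed

lemma smooth_product_sum_imp_smooth_on: "open S \<Longrightarrow> smooth_product_sum S h \<Longrightarrow> smooth_on S h"
  by (rule smooth_on_coinduct_derivative[where X="smooth_product_sum S"])
    (use smooth_product_sum_has_derivative in blast)+

lemma smooth_on_scaleR:
  "open S \<Longrightarrow> smooth_on S a \<Longrightarrow> smooth_on S k \<Longrightarrow> smooth_on S (\<lambda>x. a x *\<^sub>R k x)"
  by (rule smooth_product_sum_imp_smooth_on) (auto intro: smooth_product_sum.product)

lemma smooth_on_mult: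
  "open S \<Longrightarrow> smooth_on S a \<Longrightarrow> smooth_on S k \<Longrightarrow> smooth_on S (\<lambda>x. a x * k x :: real)"
  using smooth_on_scaleR[of S a k] by simp

lemma smooth_on_add:
  assumes "open S" "smooth_on S h1" "smooth_on S h2"
  shows "smooth_on S (\<lambda>x. h1 x + h2 x)"
proof -
  have "smooth_product_sum S (\<lambda>x. (\<lambda>x. 1::real) x *\<^sub>R h1 x + (\<lambda>x. 1::real) x *\<^sub>R h2 x)"
    by (intro smooth_product_sum.intros smooth_on_const assms)
  from smooth_product_sum_imp_smooth_on[OF assms(1) this] show ?thesis by simp
qed

lemma linear_eq_sum_Basis:
  fixes L :: "'a::euclidean_space \<Rightarrow> 'b::real_vector"
  assumes "linear L"
  shows "L w = (\<Sum>j\<in>Basis. (w \<bullet> j) *\<^sub>R L j)"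
proof -
  have "L w = L (\<Sum>j\<in>Basis. (w \<bullet> j) *\<^sub>R j)" by (simp add: euclidean_representation)
  also have "\<dots> = (\<Sum>j\<in>Basis. (w \<bullet> j) *\<^sub>R L j)"
    using assms by (simp add: linear_sum linear_scale)
  finally show ?thesis .
qed

text \<open>By the chain rule, once the derivative of k is expanded in a basis, the directional
  derivatives of a(x) k(f(x)) are again sums of such terms; so these sums form a coinduction
  invariant for smoothness of compositions.\<close>
inductive smooth_pullback_sum ::
  "'a::real_normed_vector set \<Rightarrow> 'b::euclidean_space set \<Rightarrow> ('a \<Rightarrow> 'b) \<Rightarrow> ('a \<Rightarrow> 'c::real_normed_vector) \<Rightarrow> bool"
  for U V f where
  zero: "smooth_pullback_sum U V f (\<lambda>x. 0)"
| product: "smooth_on U (a :: 'a \<Rightarrow> real) \<Longrightarrow> smooth_on V k \<Longrightarrow>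
    smooth_pullback_sum U V f (\<lambda>x. a x *\<^sub>R k (f x))"
| add: "smooth_pullback_sum U V f h1 \<Longrightarrow> smooth_pullback_sum U V f h2 \<Longrightarrow>
    smooth_pullback_sum U V f (\<lambda>x. h1 x + h2 x)"

lemma smooth_pullback_sum_sum:
  "finite B \<Longrightarrow> (\<And>j. j \<in> B \<Longrightarrow> smooth_pullback_sum U V f (H j)) \<Longrightarrow>
    smooth_pullback_sum U V f (\<lambda>x. \<Sum>j\<in>B. H j x)"
  by (induction B rule: finite_induct) (auto intro: smooth_pullback_sum.intros)

lemma smooth_pullback_sum_has_derivative:
  assumes U: "open U" and V: "open V" and f: "smooth_on U f" and fUV: "f ` U \<subseteq> V"
    and "smooth_pullback_sum U V f h"
  shows "\<exists>D. (\<forall>x\<in>U. (h has_derivative D x) (at x)) \<and> (\<forall>v. smooth_pullback_sum U V f (\<lambda>x. D x v))"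
  using assms(5)
proof induction
  case zero
  show ?case by (intro exI[of _ "\<lambda>x w. 0"]) (auto intro: smooth_pullback_sum.zero)
next
  case (product a k)
  let ?Df = "\<lambda>x. frechet_derivative f (at x)" and ?Dk = "\<lambda>y. frechet_derivative k (at y)"
  let ?D = "\<lambda>x w. (\<Sum>j\<in>Basis. (a x * (?Df x w \<bullet> j)) *\<^sub>R ?Dk (f x) j)
    + frechet_derivative a (at x) w *\<^sub>R k (f x)"
  have "((\<lambda>x. a x *\<^sub>R k (f x)) has_derivative ?D x) (at x)" if x: "x \<in> U" for x
  proof -
    have fx: "f x \<in> V" using fUV x by blast
    have dk: "(k has_derivative ?Dk (f x)) (at (f x))"
      using smooth_on_has_derivative[OF product(2) V fx] .
    have "((\<lambda>x. k (f x)) has_derivative (\<lambda>w. ?Dk (f x) (?Df x w))) (at x)"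
      using diff_chain_at[OF smooth_on_has_derivative[OF f U x] dk] by (simp add: o_def)
    from has_derivative_scaleR[OF smooth_on_has_derivative[OF product(1) U x] this]
    moreover have "a x *\<^sub>R ?Dk (f x) (?Df x w) + frechet_derivative a (at x) w *\<^sub>R k (f x) = ?D x w"
      for w
      by (subst linear_eq_sum_Basis[OF has_derivative_linear[OF dk], of "?Df x w"])
        (simp add: scaleR_sum_right mult.commute)
    ultimately show ?thesis by simp
  qed
  moreover have "smooth_pullback_sum U V f (\<lambda>x. ?D x v)" for v
  proof (intro smooth_pullback_sum.add smooth_pullback_sum_sum smooth_pullback_sum.product)
    show "smooth_on U (\<lambda>x. a x * (?Df x v \<bullet> j))" for j
      by (intro smooth_on_mult[OF U product(1)]
          smooth_on_bounded_linear_compose[OF U bounded_linear_inner_left smooth_on_frechet_derivative[OF f]])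
  qed (simp_all add: smooth_on_frechet_derivative product)
  ultimately show ?case by (intro exI[of _ ?D]) blast
next
  case (add h1 h2)
  then obtain D1 D2 where
    "\<forall>x\<in>U. (h1 has_derivative D1 x) (at x)" "\<forall>v. smooth_pullback_sum U V f (\<lambda>x. D1 x v)"
    "\<forall>x\<in>U. (h2 has_derivative D2 x) (at x)" "\<forall>v. smooth_pullback_sum U V f (\<lambda>x. D2 x v)"
    by blast
  then show ?case
    by (intro exI[of _ "\<lambda>x w. D1 x w + D2 x w"]) (auto intro: has_derivative_add smooth_pullback_sum.add)
qed

lemma smooth_on_compose:
  fixes f :: "'a::real_normed_vector \<Rightarrow> 'b::euclidean_space"
  assumes U: "open U" and V: "open V" and f: "smooth_on U f" and fUV: "f ` U \<subseteq> V"
    and k: "smooth_on V k"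
  shows "smooth_on U (\<lambda>x. k (f x))"
proof (rule smooth_on_coinduct_derivative[where X="smooth_pullback_sum U V f", OF U])
  show "smooth_pullback_sum U V f (\<lambda>x. k (f x))"
    using smooth_pullback_sum.product[OF smooth_on_const[OF U, of 1] k] by simp
qed (use smooth_pullback_sum_has_derivative[OF U V f fUV] in blast)

lemma has_real_derivative_inverse_power:
  fixes x c :: real
  assumes "x \<noteq> 0"
  shows "((\<lambda>x. c * inverse x ^ n) has_real_derivative (- c * real n * inverse x ^ Suc n)) (at x)"
proof -
  have "((\<lambda>x. c * inverse x ^ n) has_real_derivative
     c * (of_nat n * (- (inverse x ^ Suc (Suc 0)) * inverse x ^ (n - Suc 0)))) (at x)"
    by (intro DERIV_cmult DERIV_power DERIV_inverse assms)
  moreover have "c * (of_nat n * (- (inverse x ^ Suc (Suc 0)) * inverse x ^ (n - Suc 0))) =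
      - c * real n * inverse x ^ Suc n"
    by (cases n) (simp_all add: algebra_simps)
  ultimately show ?thesis by (simp only:)
qed

lemma smooth_on_inverse_real: "smooth_on (- {0}) (\<lambda>x::real. inverse x)"
proof (rule smooth_on_coinduct_derivative[where X="\<lambda>h. \<exists>c n. h = (\<lambda>x. c * inverse x ^ n)"])
  fix h assume "\<exists>c n. h = (\<lambda>x::real. c * inverse x ^ n)"
  then obtain c n where h: "h = (\<lambda>x::real. c * inverse x ^ n)" by blast
  let ?D = "\<lambda>x. (*) (- c * real n * inverse x ^ Suc n)"
  have "(h has_derivative ?D x) (at x)" if "x \<in> - {0}" for x
    using has_field_derivative_imp_has_derivative[OF has_real_derivative_inverse_power] that
    unfolding h by blast
  moreover have "(\<lambda>x. ?D x v) = (\<lambda>x. (- c * real n * v) * inverse x ^ Suc n)" for v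
    by (simp add: algebra_simps)
  ultimately show "\<exists>D. (\<forall>x\<in>- {0}. (h has_derivative D x) (at x)) \<and>
      (\<forall>v. \<exists>c n. (\<lambda>x. D x v) = (\<lambda>x. c * inverse x ^ n))"
    by (intro exI[of _ ?D]) blast
qed (auto intro!: exI[of _ 1] exI[of _ "1::nat"] simp: fun_eq_iff)

lemma smooth_on_inverse:
  fixes a :: "'a::real_normed_vector \<Rightarrow> real"
  assumes "open U" "smooth_on U a" "\<And>x. x \<in> U \<Longrightarrow> a x \<noteq> 0"
  shows "smooth_on U (\<lambda>x. inverse (a x))"
  by (rule smooth_on_compose[OF assms(1) _ assms(2) _ smooth_on_inverse_real]) (use assms(3) in auto)

lemma linear_real_eq: "linear (L::real \<Rightarrow> real) \<Longrightarrow> L t = t * L 1"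
  using linear_scale[of L t 1] by simp

lemma has_derivative_inv_into_real:
  fixes f :: "real \<Rightarrow> real"
  assumes U: "open U" and f: "smooth_on U f" and "inj_on f U" and x: "x \<in> U"
    and nz: "frechet_derivative f (at x) 1 \<noteq> 0"
  shows "(inv_into U f has_derivative (\<lambda>t. t / frechet_derivative f (at x) 1)) (at (f x))"
proof (rule has_derivative_inverse_strong[OF U x smooth_on_imp_continuous_on[OF f]])
  show "(f has_derivative frechet_derivative f (at x)) (at x)"
    using smooth_on_has_derivative[OF f U x] .
  show "frechet_derivative f (at x) \<circ> (\<lambda>t. t / frechet_derivative f (at x) 1) = id"
  proof
    show "(frechet_derivative f (at x) \<circ> (\<lambda>t. t / frechet_derivative f (at x) 1)) t = id t" for t
      using linear_real_eq[OF has_derivative_linear[OF smooth_on_has_derivative[OF f U x]],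
          of "t / frechet_derivative f (at x) 1"] nz by simp
  qed
qed (use \<open>inj_on f U\<close> in auto)

text \<open>In dimension one the derivative of the inverse is 1 / f', so smoothness of the inverse only
  needs smoothness of inverse on the reals; this is why the level set argument below reduces to
  functions of one variable.\<close>
lemma smooth_on_inv_into_real:
  fixes f :: "real \<Rightarrow> real"
  assumes U: "open U" and f: "smooth_on U f" and inj: "inj_on f U" and fU: "open (f ` U)"
    and nz: "\<And>x. x \<in> U \<Longrightarrow> frechet_derivative f (at x) 1 \<noteq> 0"
  shows "smooth_on (f ` U) (inv_into U f)"
proof -
  define g where "g = inv_into U f"
  define c where "c x = frechet_derivative f (at x) 1" for x
  have gf: "g (f x) = x" if "x \<in> U" for x using inj that g_def by simp
  have gU: "g y \<in> U" "f (g y) = y" if "y \<in> f ` U" for y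
    using that gf by auto
  have dg: "(g has_derivative (\<lambda>t. t / c (g y))) (at y)" if y: "y \<in> f ` U" for y
    using has_derivative_inv_into_real[OF U f inj gU(1)[OF y] nz[OF gU(1)[OF y]]] gU(2)[OF y]
    unfolding g_def c_def by simp
  let ?X = "\<lambda>h::real\<Rightarrow>real. \<exists>R. smooth_on U R \<and> h = (\<lambda>y. R (g y))"
  have "smooth_on (f ` U) (\<lambda>y. (\<lambda>x. x) (g y))"
  proof (rule smooth_on_coinduct_derivative[where X="?X", OF fU])
    show "?X (\<lambda>y. (\<lambda>x. x) (g y))" using smooth_on_ident[OF U] by blast
  next
    fix h assume "?X h"
    then obtain R where R: "smooth_on U R" and h: "h = (\<lambda>y. R (g y))" by blast
    define R' where "R' v x = v * (inverse (c x) * frechet_derivative R (at x) 1)" for v x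
    have "(h has_derivative (\<lambda>v. R' v (g y))) (at y)" if y: "y \<in> f ` U" for y
    proof -
      have "(h has_derivative (\<lambda>t. frechet_derivative R (at (g y)) (t / c (g y)))) (at y)"
        using diff_chain_at[OF dg[OF y] smooth_on_has_derivative[OF R U gU(1)[OF y]]]
        unfolding h by (simp add: o_def)
      moreover have "frechet_derivative R (at (g y)) (t / c (g y)) = R' t (g y)" for t
        using linear_real_eq[OF has_derivative_linear[OF smooth_on_has_derivative[OF R U gU(1)[OF y]]],
            of "t / c (g y)"]
        unfolding R'_def by (simp add: divide_inverse mult.assoc)
      ultimately show ?thesis by simp
    qed
    moreover have "smooth_on U (R' v)" for v
      unfolding R'_def
      by (intro smooth_on_mult[OF U] smooth_on_const[OF U] smooth_on_inverse[OF U]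
          smooth_on_frechet_derivative f R) (use nz smooth_on_frechet_derivative[OF f] in \<open>auto simp: c_def\<close>)
    ultimately show "\<exists>D. (\<forall>y\<in>f ` U. (h has_derivative D y) (at y)) \<and> (\<forall>v. ?X (\<lambda>y. D y v))"
      by (intro exI[of _ "\<lambda>y v. R' v (g y)"]) blast
  qed
  then show ?thesis unfolding g_def by simp
qed

lemma blinfun_apply_Blinfun_frechet_derivative:
  "smooth_on U f \<Longrightarrow> open U \<Longrightarrow> x \<in> U \<Longrightarrow>
    blinfun_apply (Blinfun (frechet_derivative f (at x))) = frechet_derivative f (at x)"
  using bounded_linear_Blinfun_apply has_derivative_bounded_linear smooth_on_has_derivative by blast

lemma continuous_on_Blinfun_frechet_derivative:
  fixes f :: "'a::euclidean_space \<Rightarrow> 'b::real_normed_vector"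
  assumes "smooth_on U f" "open U"
  shows "continuous_on U (\<lambda>x. Blinfun (frechet_derivative f (at x)))"
proof (rule continuous_on_blinfun_componentwise)
  show "continuous_on U (\<lambda>x. blinfun_apply (Blinfun (frechet_derivative f (at x))) i)" for i
    by (rule continuous_on_eq[OF smooth_on_imp_continuous_on[OF smooth_on_frechet_derivative[OF assms(1)]]])
      (simp add: blinfun_apply_Blinfun_frechet_derivative[OF assms])
qed

lemma smooth_local_inverse:
  fixes f :: "'a::euclidean_space \<Rightarrow> 'a"
  assumes U: "open U" and f: "smooth_on U f" and x0: "x0 \<in> U"
    and bij: "bij (frechet_derivative f (at x0))"
  obtains U' V g where "open U'" "U' \<subseteq> U" "x0 \<in> U'" "open V" "f x0 \<in> V"
    "homeomorphism U' V f g"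
    "\<And>y. y \<in> V \<Longrightarrow> (g has_derivative inv (frechet_derivative f (at (g y)))) (at y)"
    "\<And>y. y \<in> V \<Longrightarrow> bij (frechet_derivative f (at (g y)))"
proof -
  define F where "F x = Blinfun (frechet_derivative f (at x))" for x
  have FF: "blinfun_apply (F x) = frechet_derivative f (at x)" if "x \<in> U" for x
    unfolding F_def using blinfun_apply_Blinfun_frechet_derivative[OF f U that] .
  have derf: "(f has_derivative blinfun_apply (F x)) (at x)" if "x \<in> U" for x
    using FF[OF that] smooth_on_has_derivative[OF f U that] by simp
  have contF: "continuous_on U F"
    unfolding F_def by (rule continuous_on_Blinfun_frechet_derivative[OF f U])
  have "linear (frechet_derivative f (at x0))"
    using smooth_on_has_derivative[OF f U x0] has_derivative_linear by blast
  then obtain L where L: "linear L" "L \<circ> frechet_derivative f (at x0) = id"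
    using linear_injective_left_inverse bij_is_inj[OF bij] by blast
  have invf: "Blinfun L o\<^sub>L F x0 = id_blinfun"
  proof (rule blinfun_eqI)
    fix i
    have "bounded_linear L" using L(1) linear_conv_bounded_linear by blast
    then have "blinfun_apply (Blinfun L o\<^sub>L F x0) i = L (frechet_derivative f (at x0) i)"
      by (simp add: bounded_linear_Blinfun_apply FF[OF x0])
    also have "\<dots> = i" using L(2) by (metis comp_apply id_apply)
    finally show "blinfun_apply (Blinfun L o\<^sub>L F x0) i = blinfun_apply id_blinfun i" by simp
  qed
  show ?thesis
  proof (rule inverse_function_theorem[OF U derf contF x0 invf])
    fix U' V g g'
    assume R: "open U'" "U' \<subseteq> U" "x0 \<in> U'" "open V" "f x0 \<in> V" "homeomorphism U' V f g"
      "\<And>y. y \<in> V \<Longrightarrow> (g has_derivative (g' y)) (at y)"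
      "\<And>y. y \<in> V \<Longrightarrow> g' y = inv (blinfun_apply (F (g y)))"
      "\<And>y. y \<in> V \<Longrightarrow> bij (blinfun_apply (F (g y)))"
    have gV: "g y \<in> U" if "y \<in> V" for y
      using R(2,6) that unfolding homeomorphism_def by blast
    show ?thesis
    proof (rule that[OF R(1-6)])
      show "(g has_derivative inv (frechet_derivative f (at (g y)))) (at y)" if "y \<in> V" for y
        using R(7,8)[OF that] FF[OF gV[OF that]] by simp
      show "bij (frechet_derivative f (at (g y)))" if "y \<in> V" for y
        using R(9)[OF that] FF[OF gV[OF that]] by simp
    qed
  qed
qed

lemma bij_linear_real_iff:
  assumes "linear (L::real \<Rightarrow> real)"
  shows "bij L \<longleftrightarrow> L 1 \<noteq> 0"
proof
  assume "bij L"
  then show "L 1 \<noteq> 0" using linear_0[OF assms] by (metis bij_is_inj inj_eq one_neq_zero)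
next
  assume nz: "L 1 \<noteq> 0"
  show "bij L"
  proof (rule bijI)
    show "inj L"
    proof (rule injI)
      fix s t assume "L s = L t"
      then show "s = t" using nz linear_real_eq[OF assms, of s] linear_real_eq[OF assms, of t] by simp
    qed
    show "surj L"
      by (rule surjI[of _ "\<lambda>t. t / L 1"]) (use nz linear_real_eq[OF assms, of "_ / L 1"] in simp)
  qed
qed

lemma open_image_of_continuous_inverse:
  assumes "open (g ` U)" "continuous_on (g ` U) (inv_into U g)" "inj_on g U" "open T" "T \<subseteq> U"
  shows "open (g ` T)"
proof -
  have "g ` T = g ` U \<inter> inv_into U g -` T"
  proof (intro equalityI subsetI)
    fix y assume "y \<in> g ` T"
    then obtain t where "t \<in> T" "y = g t" by blast
    then show "y \<in> g ` U \<inter> inv_into U g -` T" using inv_into_f_f[OF assms(3)] assms(5) by auto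
  next
    fix y assume "y \<in> g ` U \<inter> inv_into U g -` T"
    then obtain u where "u \<in> U" "y = g u" "inv_into U g y \<in> T" by blast
    then show "y \<in> g ` T" using inv_into_f_f[OF assms(3)] by (metis image_eqI)
  qed
  then show ?thesis
    using continuous_on_open_vimage[OF assms(1)] assms(2,4) by (metis Int_commute)
qed

lemma diffeo_germ_inv_into:
  assumes "diffeo_germ a b \<phi>" and U: "open U" "a \<in> U" "open (\<phi> ` U)" "inj_on \<phi> U"
    "smooth_on U \<phi>" "smooth_on (\<phi> ` U) (inv_into U \<phi>)"
  shows "diffeo_germ b a (inv_into U \<phi>)"
proof -
  have "\<phi> a = b" using assms(1) unfolding diffeo_germ_def by blast
  then have ba: "inv_into U \<phi> b = a" "b \<in> \<phi> ` U" using inv_into_f_f[OF U(4,2)] U(2) by auto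
  have inv_image_eq: "inv_into U \<phi> ` \<phi> ` U = U" using inv_into_image_cancel[OF U(4)] by blast
  have "smooth_on U (inv_into (\<phi> ` U) (inv_into U \<phi>))"
    by (rule smooth_on_cong[OF U(5,1)])
      (use inv_into_inv_into_eq[OF bij_betw_imageI[OF U(4) refl]] in blast)
  then show ?thesis
    unfolding diffeo_germ_def using ba inv_image_eq U inj_on_inv_into[of "\<phi> ` U"]
    by (intro conjI exI[of _ "\<phi> ` U"]) auto
qed

lemma diffeo_germ_compose:
  fixes f g :: "'a::euclidean_space \<Rightarrow> 'a"
  assumes "diffeo_germ a b f" and "diffeo_germ b c g"
  shows "diffeo_germ a c (\<lambda>x. g (f x))"
proof -
  obtain U1 where U1: "f a = b" "open U1" "a \<in> U1" "open (f ` U1)" "inj_on f U1"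
     "smooth_on U1 f" "smooth_on (f ` U1) (inv_into U1 f)"
    using assms(1) unfolding diffeo_germ_def by blast
  obtain U2 where U2: "g b = c" "open U2" "b \<in> U2" "open (g ` U2)" "inj_on g U2"
     "smooth_on U2 g" "smooth_on (g ` U2) (inv_into U2 g)"
    using assms(2) unfolding diffeo_germ_def by blast
  define W where "W = U1 \<inter> f -` U2"
  have W: "open W" "a \<in> W" "W \<subseteq> U1" "f ` W \<subseteq> U2"
    using continuous_open_preimage[OF smooth_on_imp_continuous_on[OF U1(6)] U1(2) U2(2)] U1 U2
    unfolding W_def by auto
  have fW: "open (f ` W)"
    by (rule open_image_of_continuous_inverse[OF U1(4) smooth_on_imp_continuous_on[OF U1(7)] U1(5) W(1,3)])
  have gfW: "open (g ` f ` W)"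
    by (rule open_image_of_continuous_inverse[OF U2(4) smooth_on_imp_continuous_on[OF U2(7)] U2(5) fW W(4)])
  have inj: "inj_on (\<lambda>x. g (f x)) W"
    using inj_on_subset[OF U1(5) W(3)] inj_on_subset[OF U2(5) W(4)] by (auto simp: inj_on_def)
  have inv: "inv_into W (\<lambda>x. g (f x)) y = inv_into U1 f (inv_into U2 g y)" if y: "y \<in> g ` f ` W" for y
  proof -
    obtain w where "w \<in> W" "y = g (f w)" using y by blast
    moreover from this have "w \<in> U1" "f w \<in> U2" using W(3,4) by auto
    ultimately show ?thesis using inv_into_f_f[OF inj] inv_into_f_f[OF U1(5)] inv_into_f_f[OF U2(5)] by simp
  qed
  have "smooth_on (g ` f ` W) (\<lambda>y. inv_into U1 f (inv_into U2 g y))"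
  proof (rule smooth_on_compose[OF gfW U1(4) smooth_on_subset[OF U2(7)] _ U1(7)])
    show "inv_into U2 g ` g ` f ` W \<subseteq> f ` U1"
      using W(3,4) inv_into_f_f[OF U2(5)] by auto
  qed (use W(4) in auto)
  then have "smooth_on (g ` f ` W) (inv_into W (\<lambda>x. g (f x)))"
    by (rule smooth_on_cong[OF _ gfW]) (use inv in simp)
  moreover have "smooth_on W (\<lambda>x. g (f x))"
    by (rule smooth_on_compose[OF W(1) U2(2) smooth_on_subset[OF U1(6) W(3)] W(4) U2(6)])
  ultimately show ?thesis
    unfolding diffeo_germ_def using W(1,2) U1(1) U2(1) gfW inj
    by (intro conjI exI[of _ W]) (auto simp: image_image)
qed

lemma diffeo_germ_real_if_derivative_nonzero:
  fixes f :: "real \<Rightarrow> real"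
  assumes "smooth_germ x0 f" and nz: "frechet_derivative f (at x0) 1 \<noteq> 0"
  shows "diffeo_germ x0 (f x0) f"
proof -
  obtain U where U: "open U" "x0 \<in> U" and f: "smooth_on U f"
    using assms(1) unfolding smooth_germ_def by blast
  have lin: "linear (frechet_derivative f (at x))" if "x \<in> U" for x
    using smooth_on_has_derivative[OF f U(1) that] has_derivative_linear by blast
  have "bij (frechet_derivative f (at x0))" using nz bij_linear_real_iff[OF lin[OF U(2)]] by blast
  then show ?thesis
  proof (rule smooth_local_inverse[OF U(1) f U(2)])
    fix U' V g
    assume R: "open U'" "U' \<subseteq> U" "x0 \<in> U'" "open V" "f x0 \<in> V" "homeomorphism U' V f g"
      "\<And>y. y \<in> V \<Longrightarrow> bij (frechet_derivative f (at (g y)))"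
    have fU': "f ` U' = V" and gf: "\<And>x. x \<in> U' \<Longrightarrow> g (f x) = x"
      using R(6) unfolding homeomorphism_def by auto
    have inj: "inj_on f U'" using gf by (metis inj_on_inverseI)
    have "frechet_derivative f (at x) 1 \<noteq> 0" if "x \<in> U'" for x
      using R(7)[of "f x"] bij_linear_real_iff[OF lin] gf fU' that R(2) by auto
    moreover have f': "smooth_on U' f" using smooth_on_subset[OF f R(2)] .
    ultimately show ?thesis
      unfolding diffeo_germ_def using R(1,3,4) fU' inj smooth_on_inv_into_real[OF R(1) f' inj]
      by (intro conjI exI[of _ U']) auto
  qed
qed

lemma bij_frechet_derivative_of_smooth_inverse:
  fixes \<phi> :: "'a::euclidean_space \<Rightarrow> 'a"
  assumes U: "open U" "open (\<phi> ` U)" "inj_on \<phi> U" "smooth_on U \<phi>" "smooth_on (\<phi> ` U) (inv_into U \<phi>)"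
    and x: "x \<in> U"
  shows "bij (frechet_derivative \<phi> (at x))"
proof -
  have d1: "(\<phi> has_derivative frechet_derivative \<phi> (at x)) (at x)"
    by (rule smooth_on_has_derivative[OF U(4,1) x])
  have d2: "(inv_into U \<phi> has_derivative frechet_derivative (inv_into U \<phi>) (at (\<phi> x))) (at (\<phi> x))"
    by (rule smooth_on_has_derivative[OF U(5,2)]) (use x in blast)
  have "((\<lambda>y. inv_into U \<phi> (\<phi> y)) has_derivative
      (\<lambda>h. frechet_derivative (inv_into U \<phi>) (at (\<phi> x)) (frechet_derivative \<phi> (at x) h))) (at x)"
    using diff_chain_at[OF d1 d2] by (simp add: o_def)
  moreover have "((\<lambda>y. inv_into U \<phi> (\<phi> y)) has_derivative (\<lambda>h. h)) (at x)"
    by (rule has_derivative_transform_within_open[OF has_derivative_ident U(1) x]) (use U(3) in simp)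
  ultimately have "(\<lambda>h. frechet_derivative (inv_into U \<phi>) (at (\<phi> x)) (frechet_derivative \<phi> (at x) h)) =
      (\<lambda>h. h)"
    by (rule has_derivative_unique)
  then have "inj (frechet_derivative \<phi> (at x))" by (metis injI)
  then show ?thesis
    unfolding bij_def using linear_inj_imp_surj[OF has_derivative_linear[OF d1]] by blast
qed

lemma smooth_germ_has_derivative:
  "smooth_germ x f \<Longrightarrow> (f has_derivative frechet_derivative f (at x)) (at x)"
  unfolding smooth_germ_def using smooth_on_has_derivative by blast

lemma smooth_germ_differentiable: "smooth_germ x f \<Longrightarrow> f differentiable at x"
  using differentiableI[OF smooth_germ_has_derivative] .

lemma smooth_germ_isCont: "smooth_germ x f \<Longrightarrow> isCont f x"
  using smooth_germ_has_derivative has_derivative_continuous by blast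

lemma smooth_germ_frechet_derivative:
  "smooth_germ x f \<Longrightarrow> smooth_germ x (\<lambda>y. frechet_derivative f (at y) v)"
  unfolding smooth_germ_def using smooth_on_frechet_derivative by blast

lemma eventually_smooth_germ: "smooth_germ a f \<Longrightarrow> \<forall>\<^sub>F x in nhds a. smooth_germ x f"
  unfolding smooth_germ_def eventually_nhds by blast

lemma smooth_germ_compose:
  fixes f :: "'a::real_normed_vector \<Rightarrow> 'b::euclidean_space"
  assumes "smooth_germ a f" "smooth_germ (f a) k"
  shows "smooth_germ a (\<lambda>x. k (f x))"
proof -
  obtain U V where U: "open U" "a \<in> U" "smooth_on U f" and V: "open V" "f a \<in> V" "smooth_on V k"
    using assms unfolding smooth_germ_def by blast
  define W where "W = U \<inter> f -` V"
  have W: "open W" "a \<in> W" "W \<subseteq> U" "f ` W \<subseteq> V"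
    using continuous_open_preimage[OF smooth_on_imp_continuous_on[OF U(3)] U(1) V(1)] U V
    unfolding W_def by auto
  show ?thesis
    unfolding smooth_germ_def
    using smooth_on_compose[OF W(1) V(1) smooth_on_subset[OF U(3) W(3)] W(4) V(3)] W(1,2) by blast
qed

lemma eventually_nhds_compose:
  "isCont p a \<Longrightarrow> p a = b \<Longrightarrow> eventually P (nhds b) \<Longrightarrow> \<forall>\<^sub>F x in nhds a. P (p x)"
  by (rule eventually_compose_filterlim) (auto simp: isCont_def tendsto_at_iff_tendsto_nhds)

lemma eventually_smooth_germ_compose:
  "smooth_germ a p \<Longrightarrow> smooth_germ (p a) f \<Longrightarrow> \<forall>\<^sub>F x in nhds a. smooth_germ (p x) f"
  using eventually_nhds_compose[OF smooth_germ_isCont refl eventually_smooth_germ] .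

lemma isCont_frechet_derivative_apply:
  fixes f :: "'a::euclidean_space \<Rightarrow> 'b::real_normed_vector"
  assumes f: "smooth_germ (p x) f" and p: "isCont p x" and w: "isCont w x"
  shows "isCont (\<lambda>y. frechet_derivative f (at (p y)) (w y)) x"
proof -
  have "\<forall>\<^sub>F y in nhds x. smooth_germ (p y) f"
    using eventually_nhds_compose[OF p refl eventually_smooth_germ[OF f]] .
  then have ev: "\<forall>\<^sub>F y in nhds x.
      frechet_derivative f (at (p y)) (w y) = (\<Sum>j\<in>Basis. (w y \<bullet> j) *\<^sub>R frechet_derivative f (at (p y)) j)"
    by eventually_elim (rule linear_eq_sum_Basis[OF has_derivative_linear[OF smooth_germ_has_derivative]])
  have "isCont (\<lambda>y. frechet_derivative f (at (p y)) j) x" for j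
    using isCont_o2[OF p smooth_germ_isCont[OF smooth_germ_frechet_derivative[OF f]]] .
  then have "isCont (\<lambda>y. \<Sum>j\<in>Basis. (w y \<bullet> j) *\<^sub>R frechet_derivative f (at (p y)) j) x"
    by (intro continuous_intros w)
  then show ?thesis using isCont_cong[OF ev] by blast
qed

lemma diffeo_germ_imp_smooth_germ: "diffeo_germ a b \<phi> \<Longrightarrow> smooth_germ a \<phi>"
  unfolding diffeo_germ_def smooth_germ_def by blast

lemma eventually_bij_frechet_derivative:
  fixes \<phi> :: "'a::euclidean_space \<Rightarrow> 'a"
  assumes "diffeo_germ a b \<phi>"
  shows "\<forall>\<^sub>F x in nhds a. bij (frechet_derivative \<phi> (at x))"
proof -
  obtain U where U: "open U" "a \<in> U" "open (\<phi> ` U)" "inj_on \<phi> U" "smooth_on U \<phi>"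
    "smooth_on (\<phi> ` U) (inv_into U \<phi>)"
    using assms unfolding diffeo_germ_def by blast
  show ?thesis
    unfolding eventually_nhds
    by (intro exI[of _ U] conjI ballI U(1,2) bij_frechet_derivative_of_smooth_inverse[OF U(1,3-6)])
qed

lemma surj_linear_functional_iff:
  "linear (L::'a::real_vector \<Rightarrow> real) \<Longrightarrow> surj L \<longleftrightarrow> (\<exists>h. L h \<noteq> 0)"
proof
  assume "surj L"
  then show "\<exists>h. L h \<noteq> 0" by (metis surjD zero_neq_one)
next
  assume "linear L" "\<exists>h. L h \<noteq> 0"
  then obtain h where "L h \<noteq> 0" by blast
  then have "L ((t / L h) *\<^sub>R h) = t" for t using \<open>linear L\<close> by (simp add: linear_scale)
  then show "surj L" by (rule surjI)
qed

lemma eventually_surj_frechet_derivative: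
  fixes \<mu> :: "'a::euclidean_space \<Rightarrow> real"
  assumes "submersion_germ a \<mu>"
  shows "\<forall>\<^sub>F x in nhds a. surj (frechet_derivative \<mu> (at x))"
proof -
  have sm: "smooth_germ a \<mu>" and "surj (frechet_derivative \<mu> (at a))"
    using assms unfolding submersion_germ_def by blast+
  moreover have lin: "linear (frechet_derivative \<mu> (at x))" if "smooth_germ x \<mu>" for x
    using has_derivative_linear[OF smooth_germ_has_derivative[OF that]] .
  ultimately obtain h where h: "frechet_derivative \<mu> (at a) h \<noteq> 0"
    using surj_linear_functional_iff by blast
  obtain j where j: "frechet_derivative \<mu> (at a) j \<noteq> 0"
  proof (rule ccontr)
    assume "\<not> thesis"
    with that have "frechet_derivative \<mu> (at a) j = 0" for j by blast
    with h show False using linear_eq_sum_Basis[OF lin[OF sm], of h] by simp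
  qed
  have "((\<lambda>x. frechet_derivative \<mu> (at x) j) \<longlongrightarrow> frechet_derivative \<mu> (at a) j) (nhds a)"
    using smooth_germ_isCont[OF smooth_germ_frechet_derivative[OF sm, of j]]
    unfolding isCont_def by (metis tendsto_at_iff_tendsto_nhds)
  from tendsto_imp_eventually_ne[OF this j] eventually_smooth_germ[OF sm]
  show ?thesis
  proof eventually_elim
    case (elim x)
    then show ?case using surj_linear_functional_iff[OF lin[OF elim(2)]] by blast
  qed
qed

definition det2 :: "(real^2 \<Rightarrow> real) \<Rightarrow> (real^2 \<Rightarrow> real) \<Rightarrow> real" where
  "det2 \<alpha> \<beta> = \<alpha> (axis 1 1) * \<beta> (axis 2 1) - \<alpha> (axis 2 1) * \<beta> (axis 1 1)"

lemma wedge2_eq_det2: "wedge2 \<alpha> \<beta> u = det2 (\<alpha> u) (\<beta> u)"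
  unfolding wedge2_def det2_def ..

lemma det2_commute: "det2 \<beta> \<alpha> = - det2 \<alpha> \<beta>"
  unfolding det2_def by simp

lemma real2_eq_axis_sum: "(h::real^2) = h$1 *\<^sub>R axis 1 1 + h$2 *\<^sub>R axis 2 1"
  by (simp add: vec_eq_iff forall_2 axis_def)

lemma linear_real2_eq:
  assumes "linear (L::real^2 \<Rightarrow> 'b::real_vector)"
  shows "L h = h$1 *\<^sub>R L (axis 1 1) + h$2 *\<^sub>R L (axis 2 1)"
proof -
  have "L h = L (h$1 *\<^sub>R axis 1 1 + h$2 *\<^sub>R axis 2 1)"
    using arg_cong[OF real2_eq_axis_sum[of h], of L] .
  also have "\<dots> = h$1 *\<^sub>R L (axis 1 1) + h$2 *\<^sub>R L (axis 2 1)"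
    using assms by (simp add: linear_add linear_scale)
  finally show ?thesis .
qed

lemma det2_eq_0_iff_kernel_subset:
  assumes \<alpha>: "linear \<alpha>" and \<beta>: "linear \<beta>" and nz: "\<alpha> h0 \<noteq> 0"
  shows "det2 \<alpha> \<beta> = 0 \<longleftrightarrow> (\<forall>h. \<alpha> h = 0 \<longrightarrow> \<beta> h = 0)"
proof
  assume det: "det2 \<alpha> \<beta> = 0"
  show "\<forall>h. \<alpha> h = 0 \<longrightarrow> \<beta> h = 0"
  proof (intro allI impI)
    fix h assume "\<alpha> h = 0"
    have "\<alpha> (axis 1 1) \<noteq> 0 \<or> \<alpha> (axis 2 1) \<noteq> 0"
      using nz linear_real2_eq[OF \<alpha>, of h0] by auto
    moreover have "\<alpha> (axis 1 1) * \<beta> h = \<beta> (axis 1 1) * \<alpha> h + h$2 * det2 \<alpha> \<beta>"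
      and "\<alpha> (axis 2 1) * \<beta> h = \<beta> (axis 2 1) * \<alpha> h - h$1 * det2 \<alpha> \<beta>"
      unfolding det2_def linear_real2_eq[OF \<alpha>, of h] linear_real2_eq[OF \<beta>, of h]
      by (simp_all add: algebra_simps)
    ultimately show "\<beta> h = 0" using \<open>\<alpha> h = 0\<close> det by auto
  qed
next
  assume ker: "\<forall>h. \<alpha> h = 0 \<longrightarrow> \<beta> h = 0"
  define h :: "real^2" where "h = (- \<alpha> (axis 2 1)) *\<^sub>R axis 1 1 + \<alpha> (axis 1 1) *\<^sub>R axis 2 1"
  have h: "h$1 = - \<alpha> (axis 2 1)" "h$2 = \<alpha> (axis 1 1)" unfolding h_def by (simp_all add: axis_def)
  have "\<alpha> h = 0" using linear_real2_eq[OF \<alpha>, of h] h by simp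
  then have "\<beta> h = 0" using ker by blast
  then show "det2 \<alpha> \<beta> = 0"
    using linear_real2_eq[OF \<beta>, of h] h unfolding det2_def by (simp add: algebra_simps)
qed

definition perp2 :: "real^2 \<Rightarrow> real^2" where
  "perp2 w = vector [- w$2, w$1]"

lemma perp2_nth [simp]: "perp2 w $ 1 = - w$2" "perp2 w $ 2 = w$1"
  unfolding perp2_def by simp_all

lemma inner_real2: "(a::real^2) \<bullet> b = a$1 * b$1 + a$2 * b$2"
  by (simp add: inner_vec_def sum_2)

lemma inner_perp2_self [simp]: "w \<bullet> perp2 w = 0"
  by (simp add: inner_real2)

lemma perp2_perp2 [simp]: "perp2 (perp2 w) = - w"
  by (simp add: vec_eq_iff forall_2)

lemma perp2_eq_0_iff [simp]: "perp2 w = 0 \<longleftrightarrow> w = 0"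
  by (auto simp: vec_eq_iff forall_2)

lemma inner_perp2_perp2 [simp]: "perp2 v \<bullet> perp2 v = v \<bullet> v"
  by (simp add: inner_real2 algebra_simps)

lemma linear_perp2: "linear perp2"
  by (rule linearI) (simp_all add: vec_eq_iff forall_2)

lemma bounded_linear_perp2: "bounded_linear perp2"
  using linear_perp2 linear_conv_bounded_linear by blast

lemma orthogonal_real2_imp_multiple_perp2:
  assumes "(w::real^2) \<noteq> 0" "w \<bullet> h = 0"
  shows "h = ((perp2 w \<bullet> h) / (w \<bullet> w)) *\<^sub>R perp2 w"
proof -
  have o: "w$1 * h$1 + w$2 * h$2 = 0" using assms(2) by (simp add: inner_real2)
  have "(perp2 w \<bullet> h) * perp2 w $ i = (w \<bullet> w) * h $ i" for i
  proof -
    have "w$1 * (w$1 * h$1 + w$2 * h$2) = 0" "w$2 * (w$1 * h$1 + w$2 * h$2) = 0" by (simp_all add: o)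
    moreover have "i = 1 \<or> i = 2" by (rule exhaust_2)
    ultimately show ?thesis by (auto simp: inner_real2 algebra_simps)
  qed
  then show ?thesis using assms(1) by (simp add: vec_eq_iff field_simps)
qed

lemma orthogonal_perp2_imp_multiple:
  assumes "(v::real^2) \<noteq> 0" "perp2 v \<bullet> x = 0"
  shows "x = ((v \<bullet> x) / (v \<bullet> v)) *\<^sub>R v"
  using orthogonal_real2_imp_multiple_perp2[of "perp2 v" x] assms by simp

lemma linear_image_orthogonal_line:
  fixes \<Phi> :: "real^2 \<Rightarrow> real^2"
  assumes lin: "linear \<Phi>" and inj: "inj \<Phi>" and nz: "w \<noteq> 0" "w' \<noteq> 0"
    and perp: "w' \<bullet> \<Phi> (perp2 w) = 0"
  shows "\<Phi> ` {h. w \<bullet> h = 0} = {h. w' \<bullet> h = 0}"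
proof (intro equalityI subsetI)
  fix y assume "y \<in> \<Phi> ` {h. w \<bullet> h = 0}"
  then obtain h where h: "w \<bullet> h = 0" "y = \<Phi> h" by blast
  have "y = \<Phi> (((perp2 w \<bullet> h) / (w \<bullet> w)) *\<^sub>R perp2 w)"
    using arg_cong[OF orthogonal_real2_imp_multiple_perp2[OF nz(1) h(1)], of \<Phi>] h(2) by simp
  then show "y \<in> {h. w' \<bullet> h = 0}" using perp by (simp add: linear_scale[OF lin])
next
  fix y assume "y \<in> {h. w' \<bullet> h = 0}"
  then have y: "w' \<bullet> y = 0" by simp
  let ?r = "\<Phi> (perp2 w)"
  have "?r \<noteq> 0" using inj nz(1) linear_0[OF lin] by (metis injD perp2_eq_0_iff)
  moreover have r: "?r = ((perp2 w' \<bullet> ?r) / (w' \<bullet> w')) *\<^sub>R perp2 w'"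
    using orthogonal_real2_imp_multiple_perp2[OF nz(2) perp] .
  ultimately have s: "(perp2 w' \<bullet> ?r) / (w' \<bullet> w') \<noteq> 0" by (metis scaleR_zero_left)
  define t where "t = ((perp2 w' \<bullet> y) / (w' \<bullet> w')) / ((perp2 w' \<bullet> ?r) / (w' \<bullet> w'))"
  have "y = t *\<^sub>R ?r"
    using orthogonal_real2_imp_multiple_perp2[OF nz(2) y] s unfolding t_def
    by (subst r) simp
  also have "\<dots> = \<Phi> (t *\<^sub>R perp2 w)" by (simp add: linear_scale[OF lin])
  finally show "y \<in> \<Phi> ` {h. w \<bullet> h = 0}" by auto
qed

lemma eventually_eq_0_if_eq_0_off_nowhere_dense:
  fixes c :: "'a::t2_space \<Rightarrow> 'b::{t1_space,zero}"
  assumes U: "open U" "a \<in> U" and nd: "interior (closure (U \<inter> S)) = {}"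
    and cont: "\<forall>\<^sub>F x in nhds a. isCont c x" and off: "\<forall>\<^sub>F x in nhds a. x \<notin> S \<longrightarrow> c x = 0"
  shows "\<forall>\<^sub>F x in nhds a. c x = 0"
proof -
  obtain W where W: "open W" "a \<in> W" "\<And>x. x \<in> W \<Longrightarrow> isCont c x \<and> (x \<notin> S \<longrightarrow> c x = 0)"
    using eventually_conj[OF cont off] unfolding eventually_nhds by blast
  define Z where "Z = (W \<inter> U) \<inter> c -` (- {0})"
  have "continuous_on (W \<inter> U) c"
    by (rule continuous_at_imp_continuous_on) (use W(3) in blast)
  moreover have WU: "open (W \<inter> U)" using W(1) U(1) by (rule open_Int)
  moreover have "open (- {0::'b})" by (rule open_Compl[OF closed_singleton])
  ultimately have "open Z" unfolding Z_def by (rule continuous_open_preimage)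
  moreover have "Z \<subseteq> closure (U \<inter> S)"
  proof
    fix x assume "x \<in> Z"
    then have x: "x \<in> W" "x \<in> U" "c x \<noteq> 0" unfolding Z_def by auto
    then have "x \<in> U \<inter> S" using W(3)[OF x(1)] by blast
    then show "x \<in> closure (U \<inter> S)" by (rule closure_subset[THEN subsetD])
  qed
  ultimately have "Z \<subseteq> interior (closure (U \<inter> S))" by (rule interior_maximal[rotated])
  then have "Z = {}" using nd by simp
  then have "\<forall>x\<in>W \<inter> U. c x = 0" unfolding Z_def by auto
  then show ?thesis unfolding eventually_nhds using WU W(2) U(2) by blast
qed

lemma frechet_derivative_compose:
  assumes "g differentiable at x" "f differentiable at (g x)"
  shows "frechet_derivative (\<lambda>x. f (g x)) (at x) =
    (\<lambda>h. frechet_derivative f (at (g x)) (frechet_derivative g (at x) h))"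
  using diff_chain_at[OF assms[THEN frechet_derivative_works[THEN iffD1]]] unfolding comp_def
  by (rule frechet_derivative_at[symmetric])

lemma eventually_frechet_derivative_compose_eq:
  assumes eq: "\<forall>\<^sub>F x in nhds a. f (g x) = k (l x)"
    and diff: "\<forall>\<^sub>F x in nhds a. g differentiable at x \<and> f differentiable at (g x) \<and>
      l differentiable at x \<and> k differentiable at (l x)"
  shows "\<forall>\<^sub>F x in nhds a. \<forall>h. frechet_derivative f (at (g x)) (frechet_derivative g (at x) h) =
      frechet_derivative k (at (l x)) (frechet_derivative l (at x) h)"
proof -
  have "\<forall>\<^sub>F x in nhds a. \<forall>\<^sub>F y in nhds x. f (g y) = k (l y)"
    using eq by (simp only: eventually_eventually)
  with diff show ?thesis
  proof eventually_elim
    case (elim x)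
    have chain: "((\<lambda>x. p (q x)) has_derivative
        (\<lambda>h. frechet_derivative p (at (q x)) (frechet_derivative q (at x) h))) (at x)"
      if "q differentiable at x" "p differentiable at (q x)" for p q
      using diff_chain_at[OF that[THEN frechet_derivative_works[THEN iffD1]]] unfolding comp_def .
    have d1: "((\<lambda>x. f (g x)) has_derivative
        (\<lambda>h. frechet_derivative f (at (g x)) (frechet_derivative g (at x) h))) (at x)"
      using elim(1) by (intro chain) auto
    have d2: "((\<lambda>x. k (l x)) has_derivative
        (\<lambda>h. frechet_derivative k (at (l x)) (frechet_derivative l (at x) h))) (at x)"
      using elim(1) by (intro chain) auto
    have "\<forall>\<^sub>F y in at x. f (g y) = k (l y)"
      using elim(2) unfolding eventually_at_filter by (rule eventually_mono) simp
    then have "((\<lambda>x. k (l x)) has_derivative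
        (\<lambda>h. frechet_derivative f (at (g x)) (frechet_derivative g (at x) h))) (at x)"
      by (rule has_derivative_transform_eventually[OF d1]) (use eventually_nhds_x_imp_x[OF elim(2)] in simp_all)
    from has_derivative_unique[OF this d2] show ?case by (simp add: fun_eq_iff)
  qed
qed

lemma second_partial_zero_imp_eq_on_ball:
  fixes f :: "real^2 \<Rightarrow> 'b::real_normed_vector"
  assumes df: "\<And>y. y \<in> ball 0 r \<Longrightarrow> (f has_derivative f' y) (at y)"
    and zero: "\<And>y. y \<in> ball 0 r \<Longrightarrow> f' y (axis 2 1) = 0"
    and y: "y \<in> ball 0 r"
  shows "f y = f (y$1 *\<^sub>R axis 1 1)"
proof -
  define p where "p t = y$1 *\<^sub>R axis 1 1 + t *\<^sub>R (axis 2 1 :: real^2)" for t :: real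
  define T where "T = {min 0 (y$2) .. max 0 (y$2)}"
  have p_nth: "p t $ 1 = y$1" "p t $ 2 = t" for t unfolding p_def by (simp_all add: axis_def)
  have pB: "p t \<in> ball 0 r" if "t \<in> T" for t
  proof -
    have "norm (p t) \<le> norm y"
    proof (rule norm_le_componentwise_cart)
      fix i :: 2
      have "i = 1 \<or> i = 2" by (rule exhaust_2)
      then show "norm (p t $ i) \<le> norm (y $ i)" using that unfolding T_def by (auto simp: p_nth)
    qed
    then show ?thesis using y by simp
  qed
  have dp: "(p has_derivative (\<lambda>h. h *\<^sub>R axis 2 1)) (at t)" for t
    unfolding p_def by (auto intro!: derivative_eq_intros)
  have "((\<lambda>t. f (p t)) has_derivative (\<lambda>h. 0)) (at t within T)" if "t \<in> T" for t
  proof -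
    have "((\<lambda>t. f (p t)) has_derivative (\<lambda>h. f' (p t) (h *\<^sub>R axis 2 1))) (at t)"
      using diff_chain_at[OF dp df[OF pB[OF that]]] by (simp add: o_def)
    moreover have "f' (p t) (h *\<^sub>R axis 2 1) = 0" for h
      using linear_scale[OF has_derivative_linear[OF df[OF pB[OF that]]]] zero[OF pB[OF that]] by simp
    ultimately show ?thesis by (simp add: has_derivative_at_withinI)
  qed
  then have "f (p (y$2)) = f (p 0)"
    by (rule has_derivative_zero_unique[OF convex_real_interval(5)[of "min 0 (y$2)" "max 0 (y$2)", folded T_def]])
      (auto simp: T_def)
  moreover have "p (y$2) = y" unfolding p_def by (rule real2_eq_axis_sum[symmetric])
  ultimately show ?thesis unfolding p_def by simp
qed

lemma submersion_chart:
  fixes \<mu> :: "real^2 \<Rightarrow> real"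
  assumes \<mu>: "submersion_germ 0 \<mu>" "\<mu> 0 = 0" and v: "frechet_derivative \<mu> (at 0) v \<noteq> 0"
  defines "H x \<equiv> \<mu> x *\<^sub>R axis 1 1 + (perp2 v \<bullet> x) *\<^sub>R (axis 2 1 :: real^2)"
  obtains U V G where "open U" "0 \<in> U" "continuous_on U H" "open V" "continuous_on V G" "G 0 = 0"
    "\<And>x. x \<in> U \<Longrightarrow> H x \<in> V \<and> G (H x) = x"
    "\<And>y. y \<in> V \<Longrightarrow> G differentiable at y \<and> \<mu> (G y) = y $ 1 \<and> perp2 v \<bullet> G y = y $ 2"
proof -
  obtain U where U: "open U" "0 \<in> U" and sm: "smooth_on U \<mu>"
    using \<mu>(1) unfolding submersion_germ_def smooth_germ_def by blast
  let ?D\<mu> = "\<lambda>x. frechet_derivative \<mu> (at x)"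
  have lin0: "linear (?D\<mu> 0)"
    using has_derivative_linear[OF smooth_on_has_derivative[OF sm U]] .
  have "v \<noteq> 0" using v linear_0[OF lin0] by auto
  have H_nth: "H x $ 1 = \<mu> x" "H x $ 2 = perp2 v \<bullet> x" for x
    unfolding H_def by (simp_all add: axis_def)
  define DH where "DH x h = ?D\<mu> x h *\<^sub>R axis 1 1 + (perp2 v \<bullet> h) *\<^sub>R (axis 2 1 :: real^2)" for x h
  have dH: "(H has_derivative DH x) (at x)" if "x \<in> U" for x
    unfolding H_def DH_def
    by (intro has_derivative_add has_derivative_scaleR_left smooth_on_has_derivative[OF sm U(1) that]
        bounded_linear_imp_has_derivative bounded_linear_inner_right)
  have "inj (DH 0)"
  proof (rule linear_injective_0[THEN iffD2])
    show "linear (DH 0)" using has_derivative_linear[OF dH[OF U(2)]] .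
    show "\<forall>h. DH 0 h = 0 \<longrightarrow> h = 0"
    proof (intro allI impI)
      fix h assume "DH 0 h = 0"
      then have "?D\<mu> 0 h = 0" "perp2 v \<bullet> h = 0"
        unfolding DH_def by (simp_all add: vec_eq_iff forall_2 axis_def)
      then show "h = 0"
        using orthogonal_perp2_imp_multiple[OF \<open>v \<noteq> 0\<close>] v linear_scale[OF lin0] by (metis scaleR_eq_0_iff)
    qed
  qed
  then have bij: "bij (frechet_derivative H (at 0))"
    unfolding frechet_derivative_at[OF dH[OF U(2)], symmetric] bij_def
    using linear_inj_imp_surj has_derivative_linear[OF dH[OF U(2)]] by blast
  have smH: "smooth_on U H"
    unfolding H_def
    by (intro smooth_on_add[OF U(1)] smooth_on_scaleR[OF U(1)] sm smooth_on_const[OF U(1)]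
        smooth_on_bounded_linear[OF U(1)] bounded_linear_inner_right)
  show ?thesis
  proof (rule smooth_local_inverse[OF U(1) smH U(2) bij])
    fix U' V G
    assume R: "open U'" "U' \<subseteq> U" "0 \<in> U'" "open V" "H 0 \<in> V" "homeomorphism U' V H G"
      "\<And>y. y \<in> V \<Longrightarrow> (G has_derivative inv (frechet_derivative H (at (G y)))) (at y)"
    have "H 0 = 0" unfolding H_def using \<mu>(2) by simp
    moreover have "G 0 = 0" using R(3,6) \<open>H 0 = 0\<close> unfolding homeomorphism_def by force
    moreover have "G differentiable at y \<and> \<mu> (G y) = y $ 1 \<and> perp2 v \<bullet> G y = y $ 2" if "y \<in> V" for y
      using R(6,7) that H_nth[of "G y"] differentiableI unfolding homeomorphism_def by metis
    ultimately show ?thesis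
      using that[of U' V G] R(1,3,4,6) unfolding homeomorphism_def by auto
  qed
qed

lemma eq_on_ball_if_kernel_subset:
  fixes G :: "real^2 \<Rightarrow> real^2" and \<mu> F :: "real^2 \<Rightarrow> real"
  assumes "\<And>y. y \<in> ball 0 r \<Longrightarrow> G differentiable at y \<and> \<mu> differentiable at (G y) \<and>
      F differentiable at (G y) \<and> \<mu> (G y) = y $ 1 \<and>
      (\<forall>h. frechet_derivative \<mu> (at (G y)) h = 0 \<longrightarrow> frechet_derivative F (at (G y)) h = 0)"
    and "y \<in> ball 0 r"
  shows "F (G y) = F (G (y$1 *\<^sub>R axis 1 1))"
proof (rule second_partial_zero_imp_eq_on_ball[OF _ _ assms(2)])
  fix y :: "real^2" assume y: "y \<in> ball 0 r"
  note D = assms(1)[OF y, THEN conjunct1, THEN frechet_derivative_works[THEN iffD1]]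
    assms(1)[OF y, THEN conjunct2, THEN conjunct1, THEN frechet_derivative_works[THEN iffD1]]
    assms(1)[OF y, THEN conjunct2, THEN conjunct2, THEN conjunct1, THEN frechet_derivative_works[THEN iffD1]]
  show "((\<lambda>y. F (G y)) has_derivative
      (\<lambda>h. frechet_derivative F (at (G y)) (frechet_derivative G (at y) h))) (at y)"
    using diff_chain_at[OF D(1) D(3)] unfolding comp_def .
  have "((\<lambda>y. y $ 1) has_derivative (\<lambda>h. h $ 1)) (at y)"
    by (rule bounded_linear_imp_has_derivative[OF bounded_linear_vec_nth])
  then have "((\<lambda>y. \<mu> (G y)) has_derivative (\<lambda>h. h $ 1)) (at y)"
    by (rule has_derivative_transform_within_open[OF _ open_ball y]) (use assms(1) in simp)
  with diff_chain_at[OF D(1) D(2)]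
  have "(\<lambda>h. frechet_derivative \<mu> (at (G y)) (frechet_derivative G (at y) h)) = (\<lambda>h. h $ 1)"
    unfolding comp_def by (rule has_derivative_unique)
  from fun_cong[OF this, of "axis 2 1"]
  have "frechet_derivative \<mu> (at (G y)) (frechet_derivative G (at y) (axis 2 1)) = 0"
    by (simp add: axis_def)
  then show "frechet_derivative F (at (G y)) (frechet_derivative G (at y) (axis 2 1)) = 0"
    using assms(1)[OF y] by blast
qed

text \<open>In the chart H = (\<mu>, perp2 v \<bullet> -) the function F depends only on the first coordinate, and
  the preimage of the first axis lies on the line through v.\<close>
lemma eventually_level_set_meets_line:
  fixes \<mu> F :: "real^2 \<Rightarrow> real"
  assumes \<mu>: "submersion_germ 0 \<mu>" "\<mu> 0 = 0"
    and F: "\<forall>\<^sub>F x in nhds 0. F differentiable at x \<and>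
      (\<forall>h. frechet_derivative \<mu> (at x) h = 0 \<longrightarrow> frechet_derivative F (at x) h = 0)"
    and v: "frechet_derivative \<mu> (at 0) v \<noteq> 0"
    and T: "open T" "0 \<in> T"
  shows "\<forall>\<^sub>F u in nhds 0. \<exists>t\<in>T. \<mu> (t *\<^sub>R v) = \<mu> u \<and> F (t *\<^sub>R v) = F u"
proof -
  define H where "H x = \<mu> x *\<^sub>R axis 1 1 + (perp2 v \<bullet> x) *\<^sub>R (axis 2 1 :: real^2)" for x
  obtain U V G where U: "open U" "0 \<in> U" "continuous_on U H" and V: "open V" "continuous_on V G" "G 0 = 0"
    and GH: "\<And>x. x \<in> U \<Longrightarrow> H x \<in> V \<and> G (H x) = x"
    and HG: "\<And>y. y \<in> V \<Longrightarrow> G differentiable at y \<and> \<mu> (G y) = y $ 1 \<and> perp2 v \<bullet> G y = y $ 2"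
    using submersion_chart[OF \<mu> v] unfolding H_def by blast
  have "linear (frechet_derivative \<mu> (at 0))"
    using \<mu>(1) smooth_germ_has_derivative has_derivative_linear unfolding submersion_germ_def by blast
  then have "v \<noteq> 0" using v linear_0 by auto
  have H0: "H 0 = 0" unfolding H_def using \<mu>(2) by simp
  then have "0 \<in> V" using GH[OF U(2)] by simp
  have "isCont G 0" "isCont H 0"
    using V(1,2) U(1,2,3) \<open>0 \<in> V\<close> continuous_on_eq_continuous_at by blast+
  define good where "good x \<longleftrightarrow> (v \<bullet> x) / (v \<bullet> v) \<in> T \<and> \<mu> differentiable at x \<and>
    F differentiable at x \<and> (\<forall>h. frechet_derivative \<mu> (at x) h = 0 \<longrightarrow> frechet_derivative F (at x) h = 0)"
    for x
  have "isCont (\<lambda>x. (v \<bullet> x) / (v \<bullet> v)) 0" using \<open>v \<noteq> 0\<close> by (intro continuous_intros) auto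
  then have "\<forall>\<^sub>F x in nhds 0. (v \<bullet> x) / (v \<bullet> v) \<in> T"
    by (rule eventually_nhds_compose) (use T eventually_nhds_in_open in auto)
  moreover have "\<forall>\<^sub>F x in nhds 0. smooth_germ x \<mu>"
    using eventually_smooth_germ \<mu>(1) unfolding submersion_germ_def by blast
  ultimately have "\<forall>\<^sub>F x in nhds 0. good x"
    using F unfolding good_def by eventually_elim (simp add: smooth_germ_differentiable)
  then have "\<forall>\<^sub>F y in nhds 0. good (G y)" by (rule eventually_nhds_compose[OF \<open>isCont G 0\<close> V(3)])
  with eventually_nhds_in_open[OF V(1) \<open>0 \<in> V\<close>] have "\<forall>\<^sub>F y in nhds 0. y \<in> V \<and> good (G y)"
    by eventually_elim blast
  then obtain r where r: "r > 0" "\<And>y. y \<in> ball 0 r \<Longrightarrow> y \<in> V \<and> good (G y)"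
    unfolding eventually_nhds_metric by (auto simp: dist_commute)
  have "\<forall>\<^sub>F u in nhds 0. H u \<in> ball 0 r"
    by (rule eventually_nhds_compose[OF \<open>isCont H 0\<close> H0 eventually_nhds_ball[OF r(1)]])
  with eventually_nhds_in_open[OF U(1,2)] have "\<forall>\<^sub>F u in nhds 0. u \<in> U \<and> H u \<in> ball 0 r"
    by eventually_elim blast
  then show ?thesis
  proof (rule eventually_mono)
    fix u assume u: "u \<in> U \<and> H u \<in> ball 0 r"
    define y where "y = (H u)$1 *\<^sub>R (axis 1 1 :: real^2)"
    have "norm y \<le> norm (H u)"
      unfolding y_def using component_le_norm_cart[of "H u" 1] by simp
    then have y: "y \<in> ball 0 r" using u by simp
    have "F u = F (G y)"
      using eq_on_ball_if_kernel_subset[of r G \<mu> F "H u"] r(2) HG u GH[of u]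
      unfolding y_def good_def by auto
    moreover have "\<mu> (G y) = \<mu> u" "perp2 v \<bullet> G y = 0"
      using HG[of y] r(2)[OF y] unfolding y_def H_def by (simp_all add: axis_def)
    ultimately show "\<exists>t\<in>T. \<mu> (t *\<^sub>R v) = \<mu> u \<and> F (t *\<^sub>R v) = F u"
      using orthogonal_perp2_imp_multiple[OF \<open>v \<noteq> 0\<close>] r(2)[OF y] unfolding good_def by metis
  qed
qed

lemma frechet_derivative_along_line:
  fixes f :: "'a::real_normed_vector \<Rightarrow> 'b::real_normed_vector"
  assumes "f differentiable at 0"
  shows "frechet_derivative (\<lambda>t::real. f (t *\<^sub>R v)) (at 0) 1 = frechet_derivative f (at 0) v"
proof -
  have "((\<lambda>t::real. t *\<^sub>R v) has_derivative (\<lambda>t. t *\<^sub>R v)) (at 0)"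
    by (rule bounded_linear_imp_has_derivative[OF bounded_linear_scaleR_left])
  from diff_chain_at[OF this, of f] assms
  have "((\<lambda>t. f (t *\<^sub>R v)) has_derivative (\<lambda>t. frechet_derivative f (at 0) (t *\<^sub>R v))) (at 0)"
    unfolding comp_def using frechet_derivative_works by auto
  then show ?thesis using frechet_derivative_at by (metis scaleR_one)
qed

lemma diffeo_germ_along_line:
  fixes f :: "'a::euclidean_space \<Rightarrow> real"
  assumes "smooth_germ 0 f" "f 0 = 0" "frechet_derivative f (at 0) v \<noteq> 0"
  shows "diffeo_germ 0 0 (\<lambda>t. f (t *\<^sub>R v))"
proof -
  have "smooth_germ 0 (\<lambda>t::real. t *\<^sub>R v)"
    unfolding smooth_germ_def using smooth_on_bounded_linear[OF open_UNIV bounded_linear_scaleR_left] by blast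
  then have "smooth_germ 0 (\<lambda>t. f (t *\<^sub>R v))" using smooth_germ_compose assms(1) by fastforce
  moreover have "frechet_derivative (\<lambda>t. f (t *\<^sub>R v)) (at 0) 1 \<noteq> 0"
    using frechet_derivative_along_line[OF smooth_germ_differentiable[OF assms(1)]] assms(3) by simp
  ultimately show ?thesis using diffeo_germ_real_if_derivative_nonzero assms(2) by fastforce
qed

lemma eventually_kernel_subset_if_det2_eq_0:
  fixes \<mu> F :: "real^2 \<Rightarrow> real"
  assumes \<mu>: "submersion_germ 0 \<mu>" and F: "smooth_germ 0 F"
    and det: "\<forall>\<^sub>F x in nhds 0. det2 (frechet_derivative \<mu> (at x)) (frechet_derivative F (at x)) = 0"
  shows "\<forall>\<^sub>F x in nhds 0. F differentiable at x \<and>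
    (\<forall>h. frechet_derivative \<mu> (at x) h = 0 \<longrightarrow> frechet_derivative F (at x) h = 0)"
  using eventually_smooth_germ[OF \<mu>[unfolded submersion_germ_def, THEN conjunct1]]
    eventually_smooth_germ[OF F] eventually_surj_frechet_derivative[OF \<mu>] det
proof eventually_elim
  case (elim x)
  have lin: "linear (frechet_derivative \<mu> (at x))" "linear (frechet_derivative F (at x))"
    using elim(1,2) has_derivative_linear smooth_germ_has_derivative by blast+
  then obtain h0 where "frechet_derivative \<mu> (at x) h0 \<noteq> 0"
    using surj_linear_functional_iff elim(3) by blast
  with elim(2,4) show ?case
    using det2_eq_0_iff_kernel_subset[OF lin] smooth_germ_differentiable by blast
qed

text \<open>\<kappa> = b \<circ> a\<inverse>, where a and b are the restrictions of \<mu> and F to a line transversal to the level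
  sets of \<mu>; this is where the level set lemma is used.\<close>
lemma submersion_germ_factors_through:
  fixes \<mu> F :: "real^2 \<Rightarrow> real"
  assumes \<mu>: "submersion_germ 0 \<mu>" "\<mu> 0 = 0" and F: "submersion_germ 0 F" "F 0 = 0"
    and det: "\<forall>\<^sub>F x in nhds 0. det2 (frechet_derivative \<mu> (at x)) (frechet_derivative F (at x)) = 0"
  shows "\<exists>\<kappa>. diffeo_germ 0 0 \<kappa> \<and> (\<forall>\<^sub>F u in nhds 0. \<kappa> (\<mu> u) = F u)"
proof -
  have sm\<mu>: "smooth_germ 0 \<mu>" and smF: "smooth_germ 0 F"
    using \<mu>(1) F(1) unfolding submersion_germ_def by blast+
  have lin: "linear (frechet_derivative \<mu> (at 0))" "linear (frechet_derivative F (at 0))"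
    using sm\<mu> smF has_derivative_linear smooth_germ_has_derivative by blast+
  obtain v where v: "frechet_derivative \<mu> (at 0) v \<noteq> 0"
    using \<mu>(1) surj_linear_functional_iff[OF lin(1)] unfolding submersion_germ_def by blast
  obtain w where "frechet_derivative F (at 0) w \<noteq> 0"
    using F(1) surj_linear_functional_iff[OF lin(2)] unfolding submersion_germ_def by blast
  moreover have "det2 (frechet_derivative F (at 0)) (frechet_derivative \<mu> (at 0)) = 0"
    using eventually_nhds_x_imp_x[OF det]
      det2_commute[of "frechet_derivative \<mu> (at 0)" "frechet_derivative F (at 0)"] by simp
  ultimately have "frechet_derivative F (at 0) v \<noteq> 0"
    using det2_eq_0_iff_kernel_subset[OF lin(2,1)] v by blast
  define a where "a t = \<mu> (t *\<^sub>R v)" for t :: real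
  define b where "b t = F (t *\<^sub>R v)" for t :: real
  have "diffeo_germ 0 0 a" unfolding a_def by (rule diffeo_germ_along_line[OF sm\<mu> \<mu>(2) v])
  then obtain Ua where Ua: "open Ua" "0 \<in> Ua" "open (a ` Ua)" "inj_on a Ua" "smooth_on Ua a"
    "smooth_on (a ` Ua) (inv_into Ua a)"
    unfolding diffeo_germ_def by blast
  have "diffeo_germ 0 0 b" unfolding b_def by (rule diffeo_germ_along_line) fact+
  then have "diffeo_germ 0 0 (\<lambda>s. b (inv_into Ua a s))"
    by (rule diffeo_germ_compose[OF diffeo_germ_inv_into[OF \<open>diffeo_germ 0 0 a\<close> Ua]])
  moreover have "\<forall>\<^sub>F u in nhds 0. b (inv_into Ua a (\<mu> u)) = F u"
    using eventually_level_set_meets_line[OF \<mu> eventually_kernel_subset_if_det2_eq_0[OF \<mu>(1) smF det] v Ua(1,2)]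
  proof (rule eventually_mono)
    fix u assume "\<exists>t\<in>Ua. \<mu> (t *\<^sub>R v) = \<mu> u \<and> F (t *\<^sub>R v) = F u"
    then obtain t where t: "t \<in> Ua" "a t = \<mu> u" "b t = F u" unfolding a_def b_def by blast
    have "inv_into Ua a (a t) = t" by (rule inv_into_f_f[OF Ua(4) t(1)])
    then show "b (inv_into Ua a (\<mu> u)) = F u" using t(2,3) by simp
  qed
  ultimately show ?thesis by blast
qed

lemma linear_inner_right_compose: "linear A \<Longrightarrow> linear (\<lambda>h. w \<bullet> A h)"
  by (rule linearI) (simp_all add: linear_add linear_scale inner_add_right)

lemma contact_line_transport:
  fixes A B \<Phi> :: "real^2 \<Rightarrow> real^2" and m m' :: "real^2 \<Rightarrow> real"
  assumes lin: "linear A" "linear B" "linear m" "linear m'" "linear K"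
    and "surj A" "\<omega> \<noteq> 0" "m' h' \<noteq> 0"
    and int: "det2 m (\<lambda>h. \<omega> \<bullet> A h) = 0" and int': "det2 m' (\<lambda>h. \<omega>' \<bullet> B h) = 0"
    and diagram: "\<And>h. K (m h) = m' (P h)" "\<And>h. \<Phi> (A h) = B (P h)"
  shows "\<omega>' \<bullet> \<Phi> (perp2 \<omega>) = 0"
proof -
  obtain k0 k1 where k: "A k0 = perp2 \<omega>" "A k1 = \<omega>" using \<open>surj A\<close> by (metis surjD)
  have "\<omega> \<bullet> A k1 \<noteq> 0" using k(2) \<open>\<omega> \<noteq> 0\<close> by simp
  moreover have "det2 (\<lambda>h. \<omega> \<bullet> A h) m = 0" using int det2_commute[of "\<lambda>h. \<omega> \<bullet> A h" m] by simp
  ultimately have "m k0 = 0"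
    using det2_eq_0_iff_kernel_subset[OF linear_inner_right_compose[OF lin(1)] lin(3)] k(1) by simp
  then have "m' (P k0) = 0" using diagram(1)[of k0] linear_0[OF lin(5)] by simp
  then have "\<omega>' \<bullet> B (P k0) = 0"
    using det2_eq_0_iff_kernel_subset[OF lin(4) linear_inner_right_compose[OF lin(2)] \<open>m' h' \<noteq> 0\<close>] int'
    by blast
  then show ?thesis using diagram(2)[of k0] k(1) by simp
qed

lemma first_integral_transport:
  fixes A B \<Phi> :: "real^2 \<Rightarrow> real^2" and m m' :: "real^2 \<Rightarrow> real"
  assumes lin: "linear A" "linear B" "linear m" "linear m'" "linear P"
    and "surj A" "surj \<Phi>" "\<omega>' \<noteq> 0" "m v \<noteq> 0"
    and int: "det2 m (\<lambda>h. \<omega> \<bullet> A h) = 0" and int': "det2 m' (\<lambda>h. \<omega>' \<bullet> B h) = 0"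
    and contact: "\<Phi> ` {h. \<omega> \<bullet> h = 0} \<subseteq> {h. \<omega>' \<bullet> h = 0}"
    and diagram: "\<And>h. \<Phi> (A h) = B (P h)"
  shows "det2 m (\<lambda>h. m' (P h)) = 0"
proof -
  obtain k2 where "\<Phi> (A k2) = \<omega>'" using \<open>surj A\<close> \<open>surj \<Phi>\<close> by (metis surjD)
  then have "\<omega>' \<bullet> B (P k2) \<noteq> 0" using diagram \<open>\<omega>' \<noteq> 0\<close> by simp
  moreover have "det2 (\<lambda>h. \<omega>' \<bullet> B h) m' = 0" using int' det2_commute[of "\<lambda>h. \<omega>' \<bullet> B h" m'] by simp
  ultimately have ker': "\<omega>' \<bullet> B h = 0 \<Longrightarrow> m' h = 0" for h
    using det2_eq_0_iff_kernel_subset[OF linear_inner_right_compose[OF lin(2)] lin(4)] by blast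
  have "m' (P k) = 0" if "m k = 0" for k
  proof -
    have "\<omega> \<bullet> A k = 0"
      using det2_eq_0_iff_kernel_subset[OF lin(3) linear_inner_right_compose[OF lin(1)] \<open>m v \<noteq> 0\<close>] int that
      by blast
    then have "\<omega>' \<bullet> \<Phi> (A k) = 0" using contact by blast
    then show ?thesis using ker' diagram by simp
  qed
  then show ?thesis
    using det2_eq_0_iff_kernel_subset[OF lin(3) linear_compose[OF lin(5,4), unfolded o_def] \<open>m v \<noteq> 0\<close>]
    by blast
qed

definition integrable_at :: "(real^2 \<Rightarrow> real) \<Rightarrow> (real^2 \<Rightarrow> real^2) \<Rightarrow> (real^2 \<Rightarrow> real^2) \<Rightarrow> real^2 \<Rightarrow> bool"
  where "integrable_at \<mu> g \<omega> u \<longleftrightarrow> smooth_germ u g \<and> smooth_germ u \<omega> \<and> \<omega> u \<noteq> 0 \<and>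
    smooth_germ u \<mu> \<and> surj (frechet_derivative \<mu> (at u)) \<and>
    det2 (frechet_derivative \<mu> (at u)) (\<lambda>h. \<omega> u \<bullet> frechet_derivative g (at u) h) = 0"

lemma eventually_integrable_at:
  assumes "equation_germ g \<omega>" "first_integral \<mu> g \<omega>"
  shows "\<forall>\<^sub>F u in nhds 0. integrable_at \<mu> g \<omega> u"
proof -
  obtain U where U: "open U" "0 \<in> U" "smooth_on U g" "smooth_on U \<omega>" "\<forall>u\<in>U. \<omega> u \<noteq> 0"
    using assms(1) unfolding equation_germ_def by blast
  then have ev1: "\<forall>\<^sub>F u in nhds 0. smooth_germ u g \<and> smooth_germ u \<omega> \<and> \<omega> u \<noteq> 0"
    unfolding eventually_nhds smooth_germ_def by blast
  have sub: "submersion_germ 0 \<mu>"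
    and ev2: "\<forall>\<^sub>F u in nhds 0. wedge2 (\<lambda>u. frechet_derivative \<mu> (at u)) (pullback_contact g \<omega>) u = 0"
    using assms(2) unfolding first_integral_def by blast+
  have ev3: "\<forall>\<^sub>F u in nhds 0. smooth_germ u \<mu>"
    using sub eventually_smooth_germ unfolding submersion_germ_def by blast
  from ev1 ev2 ev3 eventually_surj_frechet_derivative[OF sub] show ?thesis
    unfolding integrable_at_def wedge2_eq_det2 pullback_contact_def by eventually_elim blast
qed

lemma integrable_atD:
  assumes "integrable_at \<mu> g \<omega> u"
  shows "(g has_derivative frechet_derivative g (at u)) (at u)" "linear (frechet_derivative g (at u))"
    "linear (frechet_derivative \<mu> (at u))" "\<exists>h. frechet_derivative \<mu> (at u) h \<noteq> 0"
  using assms smooth_germ_has_derivative has_derivative_linear surj_linear_functional_iff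
  unfolding integrable_at_def by blast+

lemma eventually_eq_0_if_eq_0_off_sing_set:
  assumes "nowhere_dense_sing g"
    and "\<forall>\<^sub>F u in nhds 0. isCont c u" "\<forall>\<^sub>F u in nhds 0. u \<notin> sing_set g \<longrightarrow> c u = 0"
  shows "\<forall>\<^sub>F u in nhds 0. c u = (0::real)"
proof -
  obtain U where "open U" "0 \<in> U" "interior (closure (U \<inter> sing_set g)) = {}"
    using assms(1) unfolding nowhere_dense_sing_def by blast
  then show ?thesis using eventually_eq_0_if_eq_0_off_nowhere_dense assms(2,3) by blast
qed

lemma eventually_integrable_at_transformed:
  assumes eq: "equation_germ g \<omega>" "first_integral \<mu> g \<omega>" and eq': "equation_germ g' \<omega>'" "first_integral \<mu>' g' \<omega>'"
    and "g 0 = 0" and \<psi>: "diffeo_germ 0 0 \<psi>" and \<phi>: "diffeo_germ 0 0 \<phi>"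
  shows "\<forall>\<^sub>F u in nhds 0. integrable_at \<mu> g \<omega> u \<and> integrable_at \<mu>' g' \<omega>' (\<psi> u) \<and>
    smooth_germ u \<psi> \<and> smooth_germ (g u) \<phi> \<and> bij (frechet_derivative \<phi> (at (g u)))"
proof -
  have int: "\<forall>\<^sub>F u in nhds 0. integrable_at \<mu> g \<omega> u" by (rule eventually_integrable_at[OF eq])
  then have "smooth_germ 0 g"
    using eventually_nhds_x_imp_x unfolding integrable_at_def by blast
  then have "\<forall>\<^sub>F u in nhds 0. smooth_germ (g u) \<phi> \<and> bij (frechet_derivative \<phi> (at (g u)))"
    using eventually_nhds_compose[OF smooth_germ_isCont[OF \<open>smooth_germ 0 g\<close>] \<open>g 0 = 0\<close>
        eventually_conj[OF eventually_smooth_germ[OF diffeo_germ_imp_smooth_germ[OF \<phi>]]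
          eventually_bij_frechet_derivative[OF \<phi>]]] by blast
  moreover have "\<forall>\<^sub>F u in nhds 0. integrable_at \<mu>' g' \<omega>' (\<psi> u)"
    using eventually_nhds_compose[OF smooth_germ_isCont[OF diffeo_germ_imp_smooth_germ[OF \<psi>]] _
        eventually_integrable_at[OF eq']] \<psi>
    unfolding diffeo_germ_def by blast
  moreover note int eventually_smooth_germ[OF diffeo_germ_imp_smooth_germ[OF \<psi>]]
  ultimately show ?thesis by eventually_elim blast
qed

lemma eventually_contact_line_transport:
  assumes eq: "equation_germ g \<omega>" "first_integral \<mu> g \<omega>" and eq': "equation_germ g' \<omega>'" "first_integral \<mu>' g' \<omega>'"
    and zero: "\<mu> 0 = 0" "g 0 = 0" and nd: "nowhere_dense_sing g"
    and \<kappa>: "diffeo_germ 0 0 \<kappa>" and \<psi>: "diffeo_germ 0 0 \<psi>" and \<phi>: "diffeo_germ 0 0 \<phi>"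
    and diagram: "\<forall>\<^sub>F u in nhds 0. \<kappa> (\<mu> u) = \<mu>' (\<psi> u)" "\<forall>\<^sub>F u in nhds 0. \<phi> (g u) = g' (\<psi> u)"
  shows "\<forall>\<^sub>F u in nhds 0. \<omega>' (\<psi> u) \<bullet> frechet_derivative \<phi> (at (g u)) (perp2 (\<omega> u)) = 0"
proof -
  note germs = eventually_integrable_at_transformed[OF eq eq' zero(2) \<psi> \<phi>]
  have \<mu>_germ: "smooth_germ 0 \<mu>"
    using eventually_nhds_x_imp_x[OF eventually_integrable_at[OF eq]] unfolding integrable_at_def by blast
  have \<kappa>_germ: "\<forall>\<^sub>F u in nhds 0. smooth_germ (\<mu> u) \<kappa>"
    using eventually_smooth_germ_compose[OF \<mu>_germ, of \<kappa>] diffeo_germ_imp_smooth_germ[OF \<kappa>] zero(1) by simp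
  have "\<forall>\<^sub>F u in nhds 0. \<mu> differentiable at u \<and> \<kappa> differentiable at (\<mu> u) \<and>
      \<psi> differentiable at u \<and> \<mu>' differentiable at (\<psi> u)"
    using germs \<kappa>_germ by eventually_elim (simp add: integrable_at_def smooth_germ_differentiable)
  from eventually_frechet_derivative_compose_eq[OF diagram(1) this]
  have chain\<kappa>: "\<forall>\<^sub>F u in nhds 0. \<forall>h. frechet_derivative \<kappa> (at (\<mu> u)) (frechet_derivative \<mu> (at u) h) =
      frechet_derivative \<mu>' (at (\<psi> u)) (frechet_derivative \<psi> (at u) h)" .
  have "\<forall>\<^sub>F u in nhds 0. g differentiable at u \<and> \<phi> differentiable at (g u) \<and>
      \<psi> differentiable at u \<and> g' differentiable at (\<psi> u)"
    using germs by eventually_elim (simp add: integrable_at_def smooth_germ_differentiable)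
  from eventually_frechet_derivative_compose_eq[OF diagram(2) this]
  have chain\<phi>: "\<forall>\<^sub>F u in nhds 0. \<forall>h. frechet_derivative \<phi> (at (g u)) (frechet_derivative g (at u) h) =
      frechet_derivative g' (at (\<psi> u)) (frechet_derivative \<psi> (at u) h)" .
  define c where "c u = \<omega>' (\<psi> u) \<bullet> frechet_derivative \<phi> (at (g u)) (perp2 (\<omega> u))" for u
  have "\<forall>\<^sub>F u in nhds 0. u \<notin> sing_set g \<longrightarrow> c u = 0"
    using germs \<kappa>_germ chain\<kappa> chain\<phi>
  proof eventually_elim
    case (elim u)
    obtain h' where "frechet_derivative \<mu>' (at (\<psi> u)) h' \<noteq> 0"
      using integrable_atD(4)[of \<mu>' g' \<omega>' "\<psi> u"] elim by blast
    moreover have "linear (frechet_derivative \<kappa> (at (\<mu> u)))"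
      using elim smooth_germ_has_derivative has_derivative_linear by blast
    ultimately show ?case
      unfolding c_def using elim integrable_atD[of \<mu> g \<omega> u] integrable_atD[of \<mu>' g' \<omega>' "\<psi> u"]
      by (intro impI contact_line_transport[where A="frechet_derivative g (at u)"
            and B="frechet_derivative g' (at (\<psi> u))" and m="frechet_derivative \<mu> (at u)"
            and m'="frechet_derivative \<mu>' (at (\<psi> u))" and K="frechet_derivative \<kappa> (at (\<mu> u))"
            and P="frechet_derivative \<psi> (at u)" and h'=h'])
        (auto simp: sing_set_def integrable_at_def)
  qed
  moreover have "\<forall>\<^sub>F u in nhds 0. isCont c u"
    using germs
  proof eventually_elim
    case (elim u)
    then have "isCont \<psi> u" "isCont g u" "isCont \<omega> u" "isCont \<omega>' (\<psi> u)"
      unfolding integrable_at_def using smooth_germ_isCont by blast+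
    moreover from this have "isCont (\<lambda>u. \<omega>' (\<psi> u)) u" "isCont (\<lambda>u. perp2 (\<omega> u)) u"
      by (auto intro: isCont_o2 linear_continuous_at bounded_linear_perp2)
    ultimately show ?case
      unfolding c_def using elim
      by (intro continuous_intros isCont_frechet_derivative_apply) auto
  qed
  ultimately show ?thesis
    unfolding c_def by (rule eventually_eq_0_if_eq_0_off_sing_set[OF nd, rotated])
qed

lemma point_equivalent_if_integral_diagram_equiv:
  assumes eq: "equation_germ g \<omega>" "first_integral \<mu> g \<omega>" and eq': "equation_germ g' \<omega>'" "first_integral \<mu>' g' \<omega>'"
    and zero: "\<mu> 0 = 0" "\<mu>' 0 = 0" "g 0 = 0" "g' 0 = 0" and nd: "nowhere_dense_sing g"
    and "integral_diagram_equiv \<mu> g \<mu>' g'"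
  shows "point_equivalent g \<omega> g' \<omega>'"
proof -
  obtain \<kappa> \<psi> \<phi> where \<kappa>: "diffeo_germ 0 0 \<kappa>" and \<psi>: "diffeo_germ 0 0 \<psi>" and \<phi>: "diffeo_germ 0 0 \<phi>"
    and diagram: "\<forall>\<^sub>F u in nhds 0. \<kappa> (\<mu> u) = \<mu>' (\<psi> u)" "\<forall>\<^sub>F u in nhds 0. \<phi> (g u) = g' (\<psi> u)"
    using assms(10) zero unfolding integral_diagram_equiv_def eventually_conj_iff by auto
  have "\<forall>\<^sub>F u in nhds 0. \<phi> (g u) = g' (\<psi> u) \<and>
      frechet_derivative \<phi> (at (g u)) ` {h. \<omega> u \<bullet> h = 0} = {h. \<omega>' (\<psi> u) \<bullet> h = 0}"
    using eventually_contact_line_transport[OF eq eq' zero(1,3) nd \<kappa> \<psi> \<phi> diagram]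
      eventually_integrable_at_transformed[OF eq eq' zero(3) \<psi> \<phi>] diagram(2)
  proof eventually_elim
    case (elim u)
    have "linear (frechet_derivative \<phi> (at (g u)))" "inj (frechet_derivative \<phi> (at (g u)))"
      using elim has_derivative_linear smooth_germ_has_derivative bij_is_inj by blast+
    with elim show ?case unfolding integrable_at_def by (simp add: linear_image_orthogonal_line)
  qed
  then show ?thesis
    unfolding point_equivalent_def using \<phi> \<psi> zero by (intro exI[of _ \<phi>] exI[of _ \<psi>]) simp
qed

lemma submersion_germ_compose_diffeo:
  fixes \<mu> :: "'a::euclidean_space \<Rightarrow> real"
  assumes \<mu>: "submersion_germ 0 \<mu>" and \<psi>: "diffeo_germ 0 0 \<psi>"
  shows "submersion_germ 0 (\<lambda>x. \<mu> (\<psi> x))"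
proof -
  have \<psi>0: "\<psi> 0 = 0" and sm\<psi>: "smooth_germ 0 \<psi>"
    using \<psi> diffeo_germ_imp_smooth_germ unfolding diffeo_germ_def by blast+
  have sm\<mu>: "smooth_germ (\<psi> 0) \<mu>" and "surj (frechet_derivative \<mu> (at (\<psi> 0)))"
    using \<mu> \<psi>0 unfolding submersion_germ_def by simp_all
  moreover have "surj (frechet_derivative \<psi> (at 0))"
    using eventually_nhds_x_imp_x[OF eventually_bij_frechet_derivative[OF \<psi>]] bij_is_surj by blast
  ultimately have "surj (frechet_derivative \<mu> (at (\<psi> 0)) \<circ> frechet_derivative \<psi> (at 0))"
    using comp_surj by blast
  then show ?thesis
    unfolding submersion_germ_def comp_def
    using smooth_germ_compose[OF sm\<psi> sm\<mu>] frechet_derivative_compose[OF smooth_germ_differentiable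
        smooth_germ_differentiable, OF sm\<psi> sm\<mu>] by simp
qed

lemma eventually_first_integral_transport:
  assumes eq: "equation_germ g \<omega>" "first_integral \<mu> g \<omega>" and eq': "equation_germ g' \<omega>'" "first_integral \<mu>' g' \<omega>'"
    and "g 0 = 0" and nd: "nowhere_dense_sing g"
    and \<psi>: "diffeo_germ 0 0 \<psi>" and \<phi>: "diffeo_germ 0 0 \<phi>"
    and diagram: "\<forall>\<^sub>F u in nhds 0. \<phi> (g u) = g' (\<psi> u) \<and>
      frechet_derivative \<phi> (at (g u)) ` {h. \<omega> u \<bullet> h = 0} = {h. \<omega>' (\<psi> u) \<bullet> h = 0}"
  shows "\<forall>\<^sub>F u in nhds 0.
    det2 (frechet_derivative \<mu> (at u)) (frechet_derivative (\<lambda>x. \<mu>' (\<psi> x)) (at u)) = 0"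
proof -
  note germs = eventually_integrable_at_transformed[OF eq eq' \<open>g 0 = 0\<close> \<psi> \<phi>]
  have "smooth_germ 0 (\<lambda>x. \<mu>' (\<psi> x))"
    using submersion_germ_compose_diffeo[OF _ \<psi>] eq'(2) unfolding first_integral_def submersion_germ_def by blast
  note F_germ = eventually_smooth_germ[OF this]
  have "\<forall>\<^sub>F u in nhds 0. g differentiable at u \<and> \<phi> differentiable at (g u) \<and>
      \<psi> differentiable at u \<and> g' differentiable at (\<psi> u)"
    using germs by eventually_elim (simp add: integrable_at_def smooth_germ_differentiable)
  moreover have "\<forall>\<^sub>F u in nhds 0. \<phi> (g u) = g' (\<psi> u)"
    using diagram by (rule eventually_mono) blast
  ultimately have chain: "\<forall>\<^sub>F u in nhds 0. \<forall>h. frechet_derivative \<phi> (at (g u)) (frechet_derivative g (at u) h) =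
      frechet_derivative g' (at (\<psi> u)) (frechet_derivative \<psi> (at u) h)"
    using eventually_frechet_derivative_compose_eq by blast
  define c where "c u = det2 (frechet_derivative \<mu> (at u)) (frechet_derivative (\<lambda>x. \<mu>' (\<psi> x)) (at u))" for u
  have "\<forall>\<^sub>F u in nhds 0. u \<notin> sing_set g \<longrightarrow> c u = 0"
    using germs chain diagram
  proof eventually_elim
    case (elim u)
    then have I: "integrable_at \<mu> g \<omega> u" and I': "integrable_at \<mu>' g' \<omega>' (\<psi> u)"
      and \<psi>u: "smooth_germ u \<psi>" and \<phi>u: "bij (frechet_derivative \<phi> (at (g u)))"
      and contact: "frechet_derivative \<phi> (at (g u)) ` {h. \<omega> u \<bullet> h = 0} \<subseteq> {h. \<omega>' (\<psi> u) \<bullet> h = 0}"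
      by blast+
    have DF: "frechet_derivative (\<lambda>x. \<mu>' (\<psi> x)) (at u) =
        (\<lambda>h. frechet_derivative \<mu>' (at (\<psi> u)) (frechet_derivative \<psi> (at u) h))"
      using I' frechet_derivative_compose[OF smooth_germ_differentiable[OF \<psi>u] smooth_germ_differentiable]
      unfolding integrable_at_def by blast
    obtain v where "frechet_derivative \<mu> (at u) v \<noteq> 0" using integrable_atD(4)[OF I] by blast
    show ?case
    proof
      assume "u \<notin> sing_set g"
      then have "surj (frechet_derivative g (at u))" unfolding sing_set_def by simp
      from first_integral_transport[OF integrable_atD(2)[OF I] integrable_atD(2)[OF I']
          integrable_atD(3)[OF I] integrable_atD(3)[OF I']
          has_derivative_linear[OF smooth_germ_has_derivative[OF \<psi>u]] this bij_is_surj[OF \<phi>u]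
          _ \<open>frechet_derivative \<mu> (at u) v \<noteq> 0\<close> _ _ contact] I I' elim
      show "c u = 0" unfolding c_def DF integrable_at_def by blast
    qed
  qed
  moreover have "\<forall>\<^sub>F u in nhds 0. isCont c u"
    using germs F_germ
  proof eventually_elim
    case (elim u)
    then have "isCont (\<lambda>x. frechet_derivative \<mu> (at x) h) u"
      "isCont (\<lambda>x. frechet_derivative (\<lambda>x. \<mu>' (\<psi> x)) (at x) h) u" for h
      unfolding integrable_at_def using smooth_germ_isCont smooth_germ_frechet_derivative by blast+
    then show ?case unfolding c_def det2_def by (intro continuous_intros)
  qed
  ultimately show ?thesis
    unfolding c_def by (rule eventually_eq_0_if_eq_0_off_sing_set[OF nd, rotated])
qed

lemma integral_diagram_equiv_if_point_equivalent:
  assumes eq: "equation_germ g \<omega>" "first_integral \<mu> g \<omega>" and eq': "equation_germ g' \<omega>'" "first_integral \<mu>' g' \<omega>'"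
    and zero: "\<mu> 0 = 0" "\<mu>' 0 = 0" "g 0 = 0" "g' 0 = 0" and nd: "nowhere_dense_sing g"
    and "point_equivalent g \<omega> g' \<omega>'"
  shows "integral_diagram_equiv \<mu> g \<mu>' g'"
proof -
  obtain \<phi> \<psi> where \<phi>: "diffeo_germ 0 0 \<phi>" and \<psi>: "diffeo_germ 0 0 \<psi>"
    and diagram: "\<forall>\<^sub>F u in nhds 0. \<phi> (g u) = g' (\<psi> u) \<and>
      frechet_derivative \<phi> (at (g u)) ` {h. \<omega> u \<bullet> h = 0} = {h. \<omega>' (\<psi> u) \<bullet> h = 0}"
    using assms(10) zero unfolding point_equivalent_def by auto
  have sub: "submersion_germ 0 \<mu>" and subF: "submersion_germ 0 (\<lambda>x. \<mu>' (\<psi> x))"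
    using eq(2) submersion_germ_compose_diffeo[OF _ \<psi>] eq'(2) unfolding first_integral_def by blast+
  have F0: "\<mu>' (\<psi> 0) = 0" using \<psi> zero(2) unfolding diffeo_germ_def by simp
  obtain \<kappa> where "diffeo_germ 0 0 \<kappa>" "\<forall>\<^sub>F u in nhds 0. \<kappa> (\<mu> u) = \<mu>' (\<psi> u)"
    using submersion_germ_factors_through[OF sub zero(1) subF F0
        eventually_first_integral_transport[OF eq eq' zero(3) nd \<psi> \<phi> diagram]] by blast
  with diagram show ?thesis
    unfolding integral_diagram_equiv_def using \<phi> \<psi> zero
    by (intro exI[of _ \<kappa>] exI[of _ \<psi>] exI[of _ \<phi>]) (auto elim: eventually_elim2)
qed

theorem proposition5:
  fixes g g' \<omega> \<omega>' :: "real^2 \<Rightarrow> real^2" and \<mu> \<mu>' :: "real^2 \<Rightarrow> real"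
  assumes "equation_germ g \<omega>" and "equation_germ g' \<omega>'"
    and "first_integral \<mu> g \<omega>" and "first_integral \<mu>' g' \<omega>'"
    and "\<mu> 0 = 0" and "\<mu>' 0 = 0"
    and "g 0 = 0" and "g' 0 = 0"
    and "nowhere_dense_sing g" and "nowhere_dense_sing g'"
  shows "point_equivalent g \<omega> g' \<omega>' \<longleftrightarrow> integral_diagram_equiv \<mu> g \<mu>' g'"
  using point_equivalent_if_integral_diagram_equiv[OF assms(1,3,2,4-9)]
    integral_diagram_equiv_if_point_equivalent[OF assms(1,3,2,4-9)]
  by blast

end
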